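(* Let $G=G_n$ be a graph on vertex set $[n]$, let $\delta=\delta(G)$ and $\bar d=\bar d(G)$, and suppose $\bar d\to\infty$ as $n\to\infty$. Suppose there exist constants $\epsilon,\zeta,\eta>0$ such that for all sufficiently large $n$: (a) $\delta\le(\epsilon/4)\bar d$; no two $\epsilon$-light vertices are adjacent; and every vertex of $G$ has at most one $\epsilon$-light neighbour; (b) no set of $s<\zeta n$ vertices induces more than $(\epsilon/4)\bar d s$ edges; (c) for all disjoint $S,S'\subseteq[n]$ with $|S|\ge|S'|\ge\zeta n$, $|E(S,S')|\ge\eta\bar d n$. Then for all sufficiently large $n$, $T(G)=\delta$.
   Context: For a graph $G$ with $|V(G)|\ge2$: $m(G)$ is the number of edges, $\delta(G)$ the minimum degree, $\bar d(G)=2m(G)/(|V(G)|-1)$, and $T(G)$ the maximum number of pairwise edge-disjoint spanning trees of $G$. A vertex is $\epsilon$-light if its degree is at most $\delta(G)+\epsilon\bar d(G)$. $E(S,S')$ is the set of edges with one end in $S$ and the other in $S'$. *)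

theory Defs
  imports Complex_Main
begin

definition simple_graph :: "'a set \<Rightarrow> 'a set set \<Rightarrow> bool" where
  "simple_graph V E \<longleftrightarrow> finite V \<and> (\<forall>e\<in>E. \<exists>u v. u \<in> V \<and> v \<in> V \<and> u \<noteq> v \<and> e = {u, v})"

definition degree :: "'a set set \<Rightarrow> 'a \<Rightarrow> nat" where
  "degree E v = card {u. {u, v} \<in> E}"

definition min_degree :: "'a set \<Rightarrow> 'a set set \<Rightarrow> nat" where
  "min_degree V E = Min ((\<lambda>v. degree E v) ` V)"

definition avg_deg :: "'a set \<Rightarrow> 'a set set \<Rightarrow> real" where
  "avg_deg V E = 2 * real (card E) / (real (card V) - 1)"

definition light :: "'a set \<Rightarrow> 'a set set \<Rightarrow> real \<Rightarrow> 'a \<Rightarrow> bool" where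
  "light V E \<epsilon> v \<longleftrightarrow> v \<in> V \<and> real (degree E v) \<le> real (min_degree V E) + \<epsilon> * avg_deg V E"

definition cross_edges :: "'a set set \<Rightarrow> 'a set \<Rightarrow> 'a set \<Rightarrow> 'a set set" where
  "cross_edges E S S' = {e \<in> E. \<exists>u\<in>S. \<exists>v\<in>S'. e = {u, v}}"

definition induced_edges :: "'a set set \<Rightarrow> 'a set \<Rightarrow> 'a set set" where
  "induced_edges E S = {e \<in> E. e \<subseteq> S}"

definition connected_on :: "'a set \<Rightarrow> 'a set set \<Rightarrow> bool" where
  "connected_on V F \<longleftrightarrow> (\<forall>u\<in>V. \<forall>v\<in>V. (u, v) \<in> {(x, y). {x, y} \<in> F}\<^sup>*)"

definition is_cycle :: "'a set set \<Rightarrow> 'a list \<Rightarrow> bool" where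
  "is_cycle F vs \<longleftrightarrow> length vs \<ge> 3 \<and> distinct vs \<and>
     (\<forall>i. Suc i < length vs \<longrightarrow> {vs ! i, vs ! Suc i} \<in> F) \<and> {last vs, hd vs} \<in> F"

definition acyclic_edges :: "'a set set \<Rightarrow> bool" where
  "acyclic_edges F \<longleftrightarrow> \<not> (\<exists>vs. is_cycle F vs)"

definition spanning_tree :: "'a set \<Rightarrow> 'a set set \<Rightarrow> 'a set set \<Rightarrow> bool" where
  "spanning_tree V E F \<longleftrightarrow> F \<subseteq> E \<and> connected_on V F \<and> acyclic_edges F"

definition tree_packing :: "'a set \<Rightarrow> 'a set set \<Rightarrow> nat" where
  "tree_packing V E = Max {k. \<exists>Ts :: nat \<Rightarrow> 'a set set.
      (\<forall>i<k. spanning_tree V E (Ts i)) \<and> (\<forall>i<k. \<forall>j<k. i \<noteq> j \<longrightarrow> Ts i \<inter> Ts j = {})}"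

end

theory Submission
  imports Defs
begin

text \<open>
  A vertex of minimum degree meets every spanning tree, so \<open>T(G) \<le> \<delta>\<close>. For the converse we use
  the sufficient half of the Nash-Williams--Tutte theorem: if every partition \<open>P\<close> of the vertices
  is crossed by at least \<open>k (|P| - 1)\<close> edges, then there are \<open>k\<close> edge-disjoint spanning trees.
  It follows from an exchange argument on \<open>k\<close> disjoint forests of maximum total size that minimise
  lexicographically their numbers of components inside the levels \<open>R\<^sub>0 \<supseteq> R\<^sub>1 \<supseteq> \<dots>\<close>,
  where \<open>R\<^sub>0 = V \<times> V\<close> and \<open>R\<^sub>i\<^sub>+\<^sub>1\<close> relates the vertices that every forest joins by edges
  inside \<open>R\<^sub>i\<close>. At the stable level every edge between different classes lies in some forest,
  and counting edges forces each forest to be connected.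

  For \<open>k = \<delta>\<close> the partition condition follows from (a)--(c). Light vertices are pairwise
  non-adjacent, so those forming singleton classes see \<open>\<delta>\<close> crossing edges each. Every other class
  of size below \<open>\<zeta> n\<close> has, by the degree sum and (b), at least \<open>2\<delta>\<close> boundary edges avoiding those
  singletons, and by (c) two classes of size at least \<open>\<zeta> n\<close> are joined by at least \<open>2\<delta>\<close> edges
  (as many as \<open>\<eta> n\<close> times the average degree), so at most one class falls short. Counting every crossing edge from both ends gives
  \<open>\<delta> (|P| - 1)\<close>.
\<close>

section \<open>Connectivity and forests\<close>

lemma simple_graph_finite_edges:
  assumes "simple_graph V E" shows "finite E"
proof -
  have "E \<subseteq> Pow V" using assms unfolding simple_graph_def by auto
  moreover have "finite V" using assms by (simp add: simple_graph_def)
  ultimately show ?thesis by (rule finite_subset[OF _ finite_Pow_iff[THEN iffD2]])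
qed

lemma simple_graph_edgeE:
  assumes "simple_graph V E" "g \<in> E"
  obtains u v where "u \<in> V" "v \<in> V" "u \<noteq> v" "g = {u, v}"
  using assms unfolding simple_graph_def by meson

definition reach :: "'a set set \<Rightarrow> ('a \<times> 'a) set" where
  "reach F = {(x, y). {x, y} \<in> F}\<^sup>*"

lemma connected_on_iff_reach: "connected_on V F \<longleftrightarrow> (\<forall>u\<in>V. \<forall>v\<in>V. (u, v) \<in> reach F)"
  by (simp add: connected_on_def reach_def)

lemma reach_refl [simp]: "(x, x) \<in> reach F"
  unfolding reach_def by simp

lemma reach_edge: "{x, y} \<in> F \<Longrightarrow> (x, y) \<in> reach F"
  unfolding reach_def by auto

lemma equiv_reach: "equiv UNIV (reach F)"
proof (rule equivI)
  show "sym (reach F)"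
    unfolding reach_def by (rule sym_rtrancl) (auto simp: sym_def insert_commute)
  show "trans (reach F)"
    unfolding reach_def by (rule trans_rtrancl)
qed (auto simp: refl_on_def)

lemma reach_sym: "(x, y) \<in> reach F \<Longrightarrow> (y, x) \<in> reach F"
  using equiv_reach by (metis equiv_def symD)

lemma reach_trans: "(x, y) \<in> reach F \<Longrightarrow> (y, z) \<in> reach F \<Longrightarrow> (x, z) \<in> reach F"
  using equiv_reach by (metis equiv_def transD)

lemma reach_mono: "F \<subseteq> F' \<Longrightarrow> reach F \<subseteq> reach F'"
  unfolding reach_def by (rule rtrancl_mono) auto

lemma reach_insert_iff:
  "(x, y) \<in> reach (insert {u, v} H) \<longleftrightarrow>
     (x, y) \<in> reach H \<or> (x, u) \<in> reach H \<and> (v, y) \<in> reach H \<or> (x, v) \<in> reach H \<and> (u, y) \<in> reach H"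
proof
  assume "(x, y) \<in> reach (insert {u, v} H)"
  then have "(x, y) \<in> {(x, y). {x, y} \<in> insert {u, v} H}\<^sup>*"
    unfolding reach_def .
  then show "(x, y) \<in> reach H \<or> (x, u) \<in> reach H \<and> (v, y) \<in> reach H \<or> (x, v) \<in> reach H \<and> (u, y) \<in> reach H"
  proof (induction rule: rtrancl_induct)
    case (step y z)
    have "(y, z) \<in> reach H \<or> y = u \<and> z = v \<or> y = v \<and> z = u"
      using step.hyps(2) by (auto simp: doubleton_eq_iff intro: reach_edge)
    with step.IH show ?case
      by (elim disjE conjE) (auto intro: reach_trans reach_sym)
  qed simp
next
  have "reach H \<subseteq> reach (insert {u, v} H)" by (rule reach_mono) auto
  moreover have "(u, v) \<in> reach (insert {u, v} H)" by (rule reach_edge) simp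
  moreover have "(v, u) \<in> reach (insert {u, v} H)" by (rule reach_edge) (simp add: insert_commute)
  ultimately show "(x, y) \<in> reach H \<or> (x, u) \<in> reach H \<and> (v, y) \<in> reach H \<or> (x, v) \<in> reach H \<and> (u, y) \<in> reach H
    \<Longrightarrow> (x, y) \<in> reach (insert {u, v} H)"
    by (meson reach_trans subsetD)
qed

lemma reach_insert_redundant:
  assumes "(u, v) \<in> reach H" shows "reach (insert {u, v} H) = reach H"
proof (intro set_eqI, clarify)
  fix x y
  show "(x, y) \<in> reach (insert {u, v} H) \<longleftrightarrow> (x, y) \<in> reach H"
    using assms reach_insert_iff[of x y u v H] by (meson reach_sym reach_trans)
qed

lemma reach_insert_class:
  "reach (insert {a, b} H) `` {x} =
    (if x \<in> reach H `` {a} \<union> reach H `` {b} then reach H `` {a} \<union> reach H `` {b} else reach H `` {x})"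
proof (cases "x \<in> reach H `` {a} \<union> reach H `` {b}")
  case True
  then consider "(x, a) \<in> reach H" | "(x, b) \<in> reach H" by (auto dest: reach_sym)
  then have "(x, y) \<in> reach (insert {a, b} H) \<longleftrightarrow> (a, y) \<in> reach H \<or> (b, y) \<in> reach H" for y
    unfolding reach_insert_iff by cases (meson reach_refl reach_sym reach_trans)+
  with True show ?thesis by auto
next
  case False
  then have "(x, a) \<notin> reach H" "(x, b) \<notin> reach H" by (auto dest: reach_sym)
  with False show ?thesis by (auto simp: reach_insert_iff)
qed

lemma reach_exchange:
  assumes "(u, v) \<in> reach (insert {a, b} H)" and "(u, v) \<notin> reach H"
  shows "reach (insert {u, v} H) = reach (insert {a, b} H)"
proof -
  from assms have "(u, a) \<in> reach H \<and> (b, v) \<in> reach H \<or> (u, b) \<in> reach H \<and> (a, v) \<in> reach H"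
    by (simp add: reach_insert_iff)
  then have "(a, b) \<in> reach (insert {u, v} H)"
    unfolding reach_insert_iff by (elim disjE) (metis reach_sym)+
  then have "reach (insert {u, v} H) = reach (insert {a, b} (insert {u, v} H))"
    by (simp add: reach_insert_redundant)
  also have "\<dots> = reach (insert {u, v} (insert {a, b} H))"
    by (simp add: insert_commute)
  also have "\<dots> = reach (insert {a, b} H)"
    using assms(1) by (rule reach_insert_redundant)
  finally show ?thesis .
qed

lemma reach_class_eq: "x \<in> reach H `` {a} \<Longrightarrow> reach H `` {x} = reach H `` {a}"
  by (rule equiv_class_eq[OF equiv_reach, symmetric]) simp

definition forest :: "'a set set \<Rightarrow> bool" where
  "forest F \<longleftrightarrow> (\<forall>g\<in>F. \<forall>u v. g = {u, v} \<longrightarrow> (u, v) \<notin> reach (F - {g}))"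

lemma forest_bridge: "forest F \<Longrightarrow> {a, b} \<in> F \<Longrightarrow> (a, b) \<notin> reach (F - {{a, b}})"
  unfolding forest_def by blast

lemma forest_empty [simp]: "forest {}"
  unfolding forest_def by simp

lemma forest_subset:
  assumes "forest F" and "F' \<subseteq> F" shows "forest F'"
  unfolding forest_def
proof (intro ballI allI impI)
  fix g u v assume "g \<in> F'" and "g = {u, v}"
  moreover have "reach (F' - {g}) \<subseteq> reach (F - {g})" by (rule reach_mono) (use assms(2) in auto)
  ultimately show "(u, v) \<notin> reach (F' - {g})" using assms unfolding forest_def by (metis subsetD)
qed

lemma forest_insert:
  assumes F: "forest F" and uv: "(u, v) \<notin> reach F"
  shows "forest (insert {u, v} F)"
  unfolding forest_def
proof (intro ballI allI impI notI)
  fix g c d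
  assume g: "g \<in> insert {u, v} F" and gcd: "g = {c, d}"
    and cd: "(c, d) \<in> reach (insert {u, v} F - {g})"
  show False
  proof (cases "g = {u, v}")
    case True
    have "{u, v} \<notin> F" using uv reach_edge by metis
    with True cd have "(c, d) \<in> reach F" by simp
    moreover have "c = u \<and> d = v \<or> c = v \<and> d = u" using True gcd by (auto simp: doubleton_eq_iff)
    ultimately show False using uv by (metis reach_sym)
  next
    case False
    then have gF: "g \<in> F" using g by simp
    have "insert {u, v} F - {g} = insert {u, v} (F - {g})" using False by auto
    with cd have "(c, d) \<in> reach (insert {u, v} (F - {g}))" by simp
    moreover have "(c, d) \<notin> reach (F - {g})" unfolding gcd by (rule forest_bridge[OF F]) (use gF gcd in simp)
    moreover have "reach (F - {g}) \<subseteq> reach F" by (rule reach_mono) auto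
    ultimately have "(c, u) \<in> reach F \<and> (v, d) \<in> reach F \<or> (c, v) \<in> reach F \<and> (u, d) \<in> reach F"
      unfolding reach_insert_iff by (metis subsetD)
    moreover have "(c, d) \<in> reach F" using gF gcd reach_edge by metis
    ultimately have "(u, v) \<in> reach F"
      by (elim disjE conjE) (metis reach_sym reach_trans)+
    with uv show False ..
  qed
qed

lemma forest_bridge_outside:
  assumes fo: "forest T" and fin: "finite T" and pairs: "\<forall>g\<in>T. \<exists>a b. g = {a, b}"
    and uvT: "(u, v) \<in> reach T" and nuv: "(u, v) \<notin> reach (T \<inter> A)"
  shows "\<exists>f\<in>T - A. (u, v) \<notin> reach (T - {f})"
proof (rule ccontr)
  assume "\<not> ?thesis"
  then have nobridge: "(u, v) \<in> reach (T - {f})" if "f \<in> T - A" for f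
    using that by blast
  have "(u, v) \<in> reach (T - S)" if "S \<subseteq> T - A" for S
  proof -
    have "finite S" using that fin finite_subset by blast
    then show ?thesis using that
    proof (induction S rule: finite_induct)
      case (insert f S)
      then have f: "f \<in> T - A" and IH: "(u, v) \<in> reach (T - S)" by auto
      obtain a b where ab: "f = {a, b}" using pairs f by auto
      show ?case
      proof (rule ccontr)
        assume nn: "(u, v) \<notin> reach (T - insert f S)"
        have "T - S = insert f (T - insert f S)" using f insert.hyps(2) by blast
        with IH nn ab have "(u, a) \<in> reach (T - insert f S) \<and> (b, v) \<in> reach (T - insert f S) \<or>
            (u, b) \<in> reach (T - insert f S) \<and> (a, v) \<in> reach (T - insert f S)"
          by (simp add: reach_insert_iff)
        then have "(u, a) \<in> reach (T - {f}) \<and> (b, v) \<in> reach (T - {f}) \<or>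
            (u, b) \<in> reach (T - {f}) \<and> (a, v) \<in> reach (T - {f})"
          using reach_mono[of "T - insert f S" "T - {f}"] by auto
        moreover have "(u, v) \<in> reach (T - {f})" using nobridge f by blast
        ultimately have "(a, b) \<in> reach (T - {f})"
          by (elim disjE conjE) (metis reach_sym reach_trans)+
        moreover have "(a, b) \<notin> reach (T - {f})" unfolding ab by (rule forest_bridge[OF fo]) (use f ab in simp)
        ultimately show False by contradiction
      qed
    qed (simp add: uvT)
  qed
  from this[of "T - A"] have "(u, v) \<in> reach (T \<inter> A)" by (simp add: Diff_Diff_Int)
  with nuv show False ..
qed

lemma acyclic_edges_if_forest:
  assumes fo: "forest F" shows "acyclic_edges F"
  unfolding acyclic_edges_def
proof
  assume "\<exists>vs. is_cycle F vs"
  then obtain vs where len: "length vs \<ge> 3" and dist: "distinct vs"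
    and path: "\<And>i. Suc i < length vs \<Longrightarrow> {vs ! i, vs ! Suc i} \<in> F"
    and closing: "{last vs, hd vs} \<in> F"
    unfolding is_cycle_def by blast
  define n where "n = length vs"
  let ?g = "{last vs, hd vs}"
  have "vs \<noteq> []" using len by auto
  then have hd: "hd vs = vs ! 0" and last: "last vs = vs ! (n - 1)"
    by (simp_all add: n_def hd_conv_nth last_conv_nth)
  have other: "{vs ! i, vs ! Suc i} \<noteq> ?g" if i: "Suc i < n" for i
  proof
    assume "{vs ! i, vs ! Suc i} = ?g"
    then have "vs ! i = vs ! (n - 1) \<and> vs ! Suc i = vs ! 0 \<or> vs ! i = vs ! 0 \<and> vs ! Suc i = vs ! (n - 1)"
      unfolding hd last by (auto simp: doubleton_eq_iff)
    moreover have inj: "j = k" if "j < n" "k < n" "vs ! j = vs ! k" for j k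
      using that dist by (simp add: n_def nth_eq_iff_index_eq)
    have "0 < n" "n - 1 < n" "i < n" using i len unfolding n_def by linarith+
    ultimately show False
      using inj[of "Suc i" 0] inj[of i 0] inj[of "Suc i" "n - 1"] i len by (elim disjE) (simp_all add: n_def)
  qed
  have "(vs ! 0, vs ! i) \<in> reach (F - {?g})" if "i < n" for i
    using that
  proof (induction i)
    case (Suc i)
    then have "{vs ! i, vs ! Suc i} \<in> F - {?g}" using path other by (simp add: n_def)
    then show ?case using Suc by (metis Suc_lessD reach_edge reach_trans)
  qed simp
  then have "(hd vs, last vs) \<in> reach (F - {?g})" using len by (simp add: hd last n_def)
  moreover have "(last vs, hd vs) \<notin> reach (F - {?g})" by (rule forest_bridge[OF fo closing])
  ultimately show False by (metis reach_sym)
qed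

definition comps :: "'a set \<Rightarrow> 'a set set \<Rightarrow> nat" where
  "comps V F = card (V // reach F)"

lemma quotient_reach_insert:
  assumes a: "a \<in> V"
  shows "V // reach (insert {a, b} H) =
    insert (reach H `` {a} \<union> reach H `` {b}) (V // reach H - {reach H `` {a}, reach H `` {b}})"
    (is "_ = insert (?C a \<union> ?C b) (?Q - {?C a, ?C b})")
proof (intro set_eqI iffI)
  fix X assume "X \<in> V // reach (insert {a, b} H)"
  then obtain x where x: "x \<in> V" "X = reach (insert {a, b} H) `` {x}" unfolding quotient_def by blast
  show "X \<in> insert (?C a \<union> ?C b) (?Q - {?C a, ?C b})"
  proof (cases "x \<in> ?C a \<union> ?C b")
    case True
    then show ?thesis unfolding x(2) reach_insert_class by simp
  next
    case False
    have "x \<in> ?C x" by simp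
    with False have "?C x \<noteq> ?C a" "?C x \<noteq> ?C b" by (metis UnI1, metis UnI2)
    moreover have "?C x \<in> ?Q" using x(1) by (rule quotientI)
    ultimately show ?thesis using False unfolding x(2) reach_insert_class by simp
  qed
next
  fix X assume X: "X \<in> insert (?C a \<union> ?C b) (?Q - {?C a, ?C b})"
  show "X \<in> V // reach (insert {a, b} H)"
  proof (cases "X = ?C a \<union> ?C b")
    case True
    then have "X = reach (insert {a, b} H) `` {a}" unfolding reach_insert_class by simp
    with a show ?thesis by (simp add: quotientI)
  next
    case False
    with X have "X \<in> ?Q" "X \<noteq> ?C a" "X \<noteq> ?C b" by simp_all
    then obtain x where x: "x \<in> V" "X = ?C x" unfolding quotient_def by blast
    have "x \<notin> ?C a \<union> ?C b"
      using reach_class_eq[of x H a] reach_class_eq[of x H b] \<open>X \<noteq> ?C a\<close> \<open>X \<noteq> ?C b\<close> x(2)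
      by auto
    with x have "X = reach (insert {a, b} H) `` {x}" unfolding reach_insert_class by simp
    with x(1) show ?thesis by (simp add: quotientI)
  qed
qed

lemma comps_insert:
  assumes fin: "finite V" and a: "a \<in> V" and b: "b \<in> V" and nab: "(a, b) \<notin> reach H"
  shows "comps V (insert {a, b} H) + 1 = comps V H"
proof -
  let ?C = "\<lambda>x. reach H `` {x}"
  let ?Q = "V // reach H"
  have ne: "?C a \<noteq> ?C b"
  proof
    assume "?C a = ?C b"
    then have "b \<in> ?C a" by simp
    with nab show False by simp
  qed
  have merged: "?C a \<union> ?C b \<notin> ?Q"
  proof
    assume "?C a \<union> ?C b \<in> ?Q"
    then obtain x where x: "?C a \<union> ?C b = ?C x" unfolding quotient_def by blast
    have "a \<in> ?C x" "b \<in> ?C x" unfolding x[symmetric] by simp_all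
    then have "?C a = ?C x" "?C b = ?C x" by (simp_all add: reach_class_eq)
    with ne show False by simp
  qed
  have "finite ?Q" using fin by (simp add: quotient_def)
  moreover have sub: "{?C a, ?C b} \<subseteq> ?Q" using a b by (simp add: quotientI)
  ultimately have "comps V (insert {a, b} H) = Suc (card ?Q - 2)"
    using ne merged quotient_reach_insert[OF a] by (simp add: comps_def card_Diff_subset)
  moreover have "card {?C a, ?C b} \<le> card ?Q" using \<open>finite ?Q\<close> sub by (rule card_mono)
  ultimately show ?thesis using ne by (simp add: comps_def)
qed

lemma forest_card_comps:
  assumes fin: "finite V" and "finite F" and "forest F"
    and edges: "\<forall>g\<in>F. \<exists>a b. a \<in> V \<and> b \<in> V \<and> g = {a, b}"
  shows "card F + comps V F = card V"
  using assms(2-)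
proof (induction F rule: finite_induct)
  case empty
  have "V // reach {} = (\<lambda>x. {x}) ` V" by (auto simp: quotient_def reach_def)
  then show ?case by (simp add: comps_def card_image)
next
  case (insert g F)
  obtain a b where ab: "a \<in> V" "b \<in> V" "g = {a, b}" using insert.prems(2) by auto
  have "forest F" using insert.prems(1) by (rule forest_subset) auto
  then have IH: "card F + comps V F = card V" using insert.IH insert.prems(2) by blast
  have "(a, b) \<notin> reach F"
    using forest_bridge[OF insert.prems(1), of a b] ab insert.hyps(2) by simp
  then have "comps V (insert {a, b} F) + 1 = comps V F" by (rule comps_insert[OF fin ab(1,2)])
  with IH insert.hyps ab(3) show ?case by simp
qed

lemma comps_pos: "finite V \<Longrightarrow> V \<noteq> {} \<Longrightarrow> comps V F \<ge> 1"
  by (simp add: comps_def quotient_def Suc_le_eq card_gt_0_iff)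

lemma reach_if_comps_eq_1:
  assumes "comps V F = 1" "x \<in> V" "y \<in> V" shows "(x, y) \<in> reach F"
proof -
  obtain Z where "V // reach F = {Z}" using assms(1) card_1_singletonE unfolding comps_def by blast
  then have "reach F `` {x} = reach F `` {y}" using assms(2,3) quotientI by (metis singletonD)
  then show ?thesis by (metis Image_singleton_iff reach_refl)
qed

section \<open>Disjoint spanning forests from the partition condition\<close>

definition inner_edges :: "('a \<times> 'a) set \<Rightarrow> 'a set set" where
  "inner_edges R = {{a, b} | a b. (a, b) \<in> R}"

lemma doubleton_in_inner_edges: "(a, b) \<in> R \<Longrightarrow> {a, b} \<in> inner_edges R"
  unfolding inner_edges_def by blast

lemma doubleton_in_inner_edges_iff:
  assumes "sym R" shows "{a, b} \<in> inner_edges R \<longleftrightarrow> (a, b) \<in> R"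
proof
  assume "{a, b} \<in> inner_edges R"
  then obtain c d where "{a, b} = {c, d}" "(c, d) \<in> R" unfolding inner_edges_def by blast
  with assms show "(a, b) \<in> R" by (metis doubleton_eq_iff symD)
qed (rule doubleton_in_inner_edges)

lemma reach_inner_edges_subset:
  assumes R: "equiv V R" and x: "x \<in> V" and xy: "(x, y) \<in> reach (F \<inter> inner_edges R)"
  shows "(x, y) \<in> R"
proof -
  have "(x, y) \<in> {(a, b). {a, b} \<in> F \<inter> inner_edges R}\<^sup>*" using xy unfolding reach_def .
  then show ?thesis
  proof (induction rule: rtrancl_induct)
    case base
    show ?case using R x by (simp add: equiv_def refl_on_def)
  next
    case (step y z)
    then have "(y, z) \<in> R" using R by (simp add: equiv_def doubleton_in_inner_edges_iff)
    with step.IH R show ?case by (metis equiv_def transD)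
  qed
qed

fun level_rel :: "'a set \<Rightarrow> nat \<Rightarrow> (nat \<Rightarrow> 'a set set) \<Rightarrow> nat \<Rightarrow> ('a \<times> 'a) set" where
  "level_rel V k Ts 0 = V \<times> V"
| "level_rel V k Ts (Suc i) =
     level_rel V k Ts i \<inter> (\<Inter>l<k. reach (Ts l \<inter> inner_edges (level_rel V k Ts i)))"

lemma level_rel_antimono: "i \<le> j \<Longrightarrow> level_rel V k Ts j \<subseteq> level_rel V k Ts i"
  by (induction j rule: dec_induct) auto

lemma equiv_level_rel: "equiv V (level_rel V k Ts i)"
proof (induction i)
  case 0
  show ?case by (auto simp: equiv_def refl_on_def sym_def trans_def)
next
  case (Suc i)
  let ?I = "\<Inter>l<k. reach (Ts l \<inter> inner_edges (level_rel V k Ts i))"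
  have "sym ?I" "trans ?I"
    using equiv_reach by (auto intro!: sym_INTER trans_INTER simp: equiv_def)
  with Suc show ?case
    by (auto simp: equiv_def refl_on_def intro: sym_Int trans_Int)
qed

lemma level_rel_stable:
  assumes fin: "finite V"
  shows "level_rel V k Ts (Suc (card (V \<times> V))) = level_rel V k Ts (card (V \<times> V))"
proof (rule ccontr)
  let ?N = "card (V \<times> V)"
  let ?L = "level_rel V k Ts"
  assume ne: "?L (Suc ?N) \<noteq> ?L ?N"
  have strict: "?L (Suc i) \<subset> ?L i" if "i \<le> ?N" for i
  proof -
    have "?L (Suc i) = ?L i \<Longrightarrow> ?L j = ?L i" if "i \<le> j" for j
      using that by (induction j rule: dec_induct) auto
    with ne \<open>i \<le> ?N\<close> have "?L (Suc i) \<noteq> ?L i" by (metis le_Suc_eq)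
    then show ?thesis by auto
  qed
  have "card (?L i) + i \<le> ?N" if "i \<le> Suc ?N" for i
    using that
  proof (induction i)
    case (Suc i)
    have "?L i \<subseteq> V \<times> V" using equiv_level_rel by (metis equiv_type)
    then have "finite (?L i)" using fin finite_subset by blast
    with strict[of i] Suc.prems have "card (?L (Suc i)) < card (?L i)" by (simp add: psubset_card_mono)
    with Suc show ?case by simp
  qed simp
  from this[of "Suc ?N"] show False by simp
qed

lemma level_rel_cong:
  assumes "\<And>i l. i < m \<Longrightarrow> l < k \<Longrightarrow>
     reach (Ts' l \<inter> inner_edges (level_rel V k Ts i)) = reach (Ts l \<inter> inner_edges (level_rel V k Ts i))"
  shows "i \<le> m \<Longrightarrow> level_rel V k Ts' i = level_rel V k Ts i"
  using assms by (induction i) simp_all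

lemma reach_exchange_inner_edges:
  assumes f: "f \<in> T" "f = {a, b}" and uv: "(u, v) \<in> reach (T \<inter> I)" "{u, v} \<in> I"
    and bridge: "(u, v) \<notin> reach (T - {f})"
  shows "reach (insert {u, v} (T - {f}) \<inter> I) = reach (T \<inter> I)"
proof -
  have eq: "insert {u, v} (T - {f}) \<inter> I = insert {u, v} (T \<inter> I - {f})"
    using uv(2) by blast
  show ?thesis
  proof (cases "f \<in> I")
    case True
    have "T \<inter> I = insert {a, b} (T \<inter> I - {f})" using f True by blast
    moreover have "(u, v) \<notin> reach (T \<inter> I - {f})"
      using bridge reach_mono[of "T \<inter> I - {f}" "T - {f}"] by blast
    ultimately show ?thesis using uv(1) eq reach_exchange by metis
  next
    case False
    then have "T \<inter> I - {f} = T \<inter> I" by blast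
    with eq uv(1) show ?thesis by (simp add: reach_insert_redundant)
  qed
qed

definition forest_family :: "'a set set \<Rightarrow> nat \<Rightarrow> (nat \<Rightarrow> 'a set set) \<Rightarrow> bool" where
  "forest_family E k Ts \<longleftrightarrow>
     (\<forall>i<k. Ts i \<subseteq> E \<and> forest (Ts i)) \<and> (\<forall>i<k. \<forall>j<k. i \<noteq> j \<longrightarrow> Ts i \<inter> Ts j = {})"

definition family_size :: "nat \<Rightarrow> (nat \<Rightarrow> 'a set set) \<Rightarrow> nat" where
  "family_size k Ts = (\<Sum>i<k. card (Ts i))"

definition level_profile :: "'a set \<Rightarrow> nat \<Rightarrow> (nat \<Rightarrow> 'a set set) \<Rightarrow> nat \<Rightarrow> nat list" where
  "level_profile V k Ts N =
     map (\<lambda>i. \<Sum>l<k. comps V (Ts l \<inter> inner_edges (level_rel V k Ts i))) [0..<N]"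

lemma forest_family_empty: "forest_family E k (\<lambda>_. {})"
  by (simp add: forest_family_def)

lemma forest_family_update:
  assumes "forest_family E k Ts" and "j < k" and "X \<subseteq> E" and "forest X"
    and "\<And>l. l < k \<Longrightarrow> l \<noteq> j \<Longrightarrow> X \<inter> Ts l = {}"
  shows "forest_family E k (Ts(j := X))"
  using assms unfolding forest_family_def by (auto simp: Int_commute)

lemma family_size_le:
  assumes "forest_family E k Ts" "finite E" shows "family_size k Ts \<le> k * card E"
proof -
  have "family_size k Ts \<le> (\<Sum>i<k. card E)" unfolding family_size_def
    using assms by (intro sum_mono card_mono) (auto simp: forest_family_def)
  then show ?thesis by simp
qed

lemma family_size_update:
  assumes "j < k" and "finite (Ts j)" and "finite X"
  shows "family_size k (Ts(j := X)) + card (Ts j) = family_size k Ts + card X"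
proof -
  have "family_size k (Ts(j := X)) = card X + (\<Sum>i\<in>{..<k} - {j}. card (Ts i))"
    unfolding family_size_def using assms(1) by (simp add: sum.remove)
  moreover have "family_size k Ts = card (Ts j) + (\<Sum>i\<in>{..<k} - {j}. card (Ts i))"
    unfolding family_size_def using assms(1) by (simp add: sum.remove)
  ultimately show ?thesis by simp
qed

lemma lex_less_than_if_first_difference:
  assumes len: "length xs = length ys" and m: "m < length xs"
    and pre: "\<And>i. i < m \<Longrightarrow> xs ! i = ys ! i" and lt: "xs ! m < ys ! m"
  shows "(xs, ys) \<in> lex less_than"
proof -
  have t: "take m xs = take m ys" using pre len m by (intro nth_equalityI) auto
  have xs: "xs = take m xs @ xs ! m # drop (Suc m) xs" using m by (simp add: id_take_nth_drop)
  have ys: "ys = take m xs @ ys ! m # drop (Suc m) ys" using m len t by (metis id_take_nth_drop)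
  show ?thesis unfolding lex_conv using len lt xs ys
    by (intro CollectI case_prodI conjI exI[of _ "take m xs"] exI[of _ "xs ! m"] exI[of _ "ys ! m"]
        exI[of _ "drop (Suc m) xs"] exI[of _ "drop (Suc m) ys"]) auto
qed

lemma level_profile_lex_less:
  assumes m: "m < N"
    and lower: "\<And>i l. i < m \<Longrightarrow> l < k \<Longrightarrow>
      reach (Ts' l \<inter> inner_edges (level_rel V k Ts i)) = reach (Ts l \<inter> inner_edges (level_rel V k Ts i))"
    and at_m: "(\<Sum>l<k. comps V (Ts' l \<inter> inner_edges (level_rel V k Ts m)))
      < (\<Sum>l<k. comps V (Ts l \<inter> inner_edges (level_rel V k Ts m)))"
  shows "(level_profile V k Ts' N, level_profile V k Ts N) \<in> lex less_than"
proof (rule lex_less_than_if_first_difference)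
  have same_level: "level_rel V k Ts' i = level_rel V k Ts i" if "i \<le> m" for i
    using level_rel_cong[OF lower that] by blast
  show "level_profile V k Ts' N ! i = level_profile V k Ts N ! i" if "i < m" for i
    using that m lower[OF that] same_level[of i] by (simp add: level_profile_def comps_def)
  show "level_profile V k Ts' N ! m < level_profile V k Ts N ! m"
    using m at_m same_level[of m] by (simp add: level_profile_def)
qed (use m in \<open>simp_all add: level_profile_def\<close>)

lemma forest_family_augment:
  assumes fam: "forest_family E k Ts" and fin: "finite E" and j: "j < k"
    and uv: "{u, v} \<in> E" "\<forall>l<k. {u, v} \<notin> Ts l" and nuv: "(u, v) \<notin> reach (Ts j)"
  shows "forest_family E k (Ts(j := insert {u, v} (Ts j)))"
    and "family_size k (Ts(j := insert {u, v} (Ts j))) = Suc (family_size k Ts)"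
proof -
  have Tj: "Ts j \<subseteq> E" "forest (Ts j)" using fam j by (simp_all add: forest_family_def)
  show "forest_family E k (Ts(j := insert {u, v} (Ts j)))"
  proof (rule forest_family_update[OF fam j])
    show "insert {u, v} (Ts j) \<subseteq> E" using Tj(1) uv(1) by simp
    show "forest (insert {u, v} (Ts j))" using Tj(2) nuv by (rule forest_insert)
    show "insert {u, v} (Ts j) \<inter> Ts l = {}" if "l < k" "l \<noteq> j" for l
      using fam that j uv(2) by (simp add: forest_family_def)
  qed
  have "finite (Ts j)" using Tj(1) fin finite_subset by blast
  from family_size_update[where Ts = Ts, OF j this, of "insert {u, v} (Ts j)"] this uv(2) j
  show "family_size k (Ts(j := insert {u, v} (Ts j))) = Suc (family_size k Ts)" by simp
qed

text \<open>
  Swapping \<open>{u, v}\<close> for a bridge of \<open>Ts j\<close> outside level \<open>m\<close> keeps every lower level and merges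
  two components of \<open>Ts j\<close> at level \<open>m\<close>.\<close>

lemma forest_family_exchange:
  assumes fam: "forest_family E k Ts" and fin: "finite E" and V: "finite V"
    and pairs: "\<forall>g\<in>E. \<exists>a b. g = {a, b}" and j: "j < k"
    and uv: "{u, v} \<in> E" "u \<in> V" "v \<in> V" "\<forall>l<k. {u, v} \<notin> Ts l"
    and m: "m < N" "(u, v) \<in> level_rel V k Ts m"
    and cut: "(u, v) \<notin> reach (Ts j \<inter> inner_edges (level_rel V k Ts m))"
    and conn: "(u, v) \<in> reach (Ts j)"
  shows "\<exists>Ts'. forest_family E k Ts' \<and> family_size k Ts' = family_size k Ts \<and>
           (level_profile V k Ts' N, level_profile V k Ts N) \<in> lex less_than"
proof -
  let ?L = "level_rel V k Ts"
  let ?C = "inner_edges (?L m)"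
  have Tj: "Ts j \<subseteq> E" "forest (Ts j)" using fam j by (simp_all add: forest_family_def)
  have finT: "finite (Ts j)" using Tj(1) fin finite_subset by blast
  obtain f where f: "f \<in> Ts j" "f \<notin> ?C" and bridge: "(u, v) \<notin> reach (Ts j - {f})"
    using forest_bridge_outside[OF Tj(2) finT _ conn cut] Tj(1) pairs by blast
  obtain a b where ab: "f = {a, b}" using f(1) Tj(1) pairs by blast
  define X where "X = insert {u, v} (Ts j - {f})"
  define Ts' where "Ts' = Ts(j := X)"
  have fam': "forest_family E k Ts'" unfolding Ts'_def
  proof (rule forest_family_update[OF fam j])
    show "X \<subseteq> E" using Tj(1) uv(1) by (auto simp: X_def)
    have "forest (Ts j - {f})" using Tj(2) by (rule forest_subset) auto
    then show "forest X" unfolding X_def using bridge by (rule forest_insert)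
    show "X \<inter> Ts l = {}" if "l < k" "l \<noteq> j" for l
      using fam that j uv(4) unfolding forest_family_def X_def by blast
  qed
  have "card X = card (Ts j)" using card.remove[OF finT f(1)] finT uv(4) j by (simp add: X_def)
  then have size: "family_size k Ts' = family_size k Ts"
    using family_size_update[where Ts = Ts, OF j finT, of X] finT by (simp add: Ts'_def X_def)
  have "(level_profile V k Ts' N, level_profile V k Ts N) \<in> lex less_than"
  proof (rule level_profile_lex_less[OF m(1)])
    fix i l assume i: "i < m" and l: "l < k"
    have "(u, v) \<in> ?L (Suc i)" using level_rel_antimono[of "Suc i" m V k Ts] i m(2) by (metis Suc_leI subsetD)
    then have "(u, v) \<in> reach (Ts j \<inter> inner_edges (?L i))" "(u, v) \<in> ?L i"
      using j by auto
    then have "(u, v) \<in> reach (Ts j \<inter> inner_edges (?L i))" "{u, v} \<in> inner_edges (?L i)"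
      by (simp_all add: doubleton_in_inner_edges)
    then show "reach (Ts' l \<inter> inner_edges (?L i)) = reach (Ts l \<inter> inner_edges (?L i))"
      using reach_exchange_inner_edges[OF f(1) ab _ _ bridge] by (simp add: Ts'_def X_def)
  next
    have "{u, v} \<in> ?C" using m(2) by (rule doubleton_in_inner_edges)
    then have "Ts' j \<inter> ?C = insert {u, v} (Ts j \<inter> ?C)" using f(2) j by (auto simp: Ts'_def X_def)
    then have "comps V (Ts' j \<inter> ?C) < comps V (Ts j \<inter> ?C)"
      using comps_insert[OF V uv(2,3) cut] by simp
    then show "(\<Sum>l<k. comps V (Ts' l \<inter> ?C)) < (\<Sum>l<k. comps V (Ts l \<inter> ?C))"
      using j by (intro sum_strict_mono_ex1) (auto simp: Ts'_def)
  qed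
  with fam' size show ?thesis by blast
qed

definition optimal_family :: "'a set \<Rightarrow> 'a set set \<Rightarrow> nat \<Rightarrow> (nat \<Rightarrow> 'a set set) \<Rightarrow> bool" where
  "optimal_family V E k Ts \<longleftrightarrow> forest_family E k Ts \<and>
     (\<forall>Ts'. forest_family E k Ts' \<longrightarrow> family_size k Ts' \<le> family_size k Ts) \<and>
     (\<forall>Ts'. forest_family E k Ts' \<and> family_size k Ts' = family_size k Ts \<longrightarrow>
        (level_profile V k Ts' (card (V \<times> V)), level_profile V k Ts (card (V \<times> V))) \<notin> lex less_than)"

lemma optimal_family_exists:
  assumes fin: "finite E" shows "\<exists>Ts. optimal_family V E k Ts"
proof -
  let ?N = "card (V \<times> V)"
  let ?S = "family_size k ` Collect (forest_family E k)"
  define s where "s = Max ?S"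
  have "?S \<subseteq> {..k * card E}" using family_size_le[OF _ fin] by auto
  then have finS: "finite ?S" by (rule finite_subset) simp
  have "?S \<noteq> {}" using forest_family_empty by blast
  with finS have "s \<in> ?S" unfolding s_def by (rule Max_in)
  then obtain Ts0 where Ts0: "forest_family E k Ts0" "family_size k Ts0 = s" by blast
  have smax: "family_size k Ts \<le> s" if "forest_family E k Ts" for Ts
    unfolding s_def using finS that by (simp add: Max_ge)
  define Q where "Q = {level_profile V k Ts ?N | Ts. forest_family E k Ts \<and> family_size k Ts = s}"
  have "level_profile V k Ts0 ?N \<in> Q" using Ts0 unfolding Q_def by blast
  then obtain z where "z \<in> Q" and zmin: "\<And>y. (y, z) \<in> lex less_than \<Longrightarrow> y \<notin> Q"
    by (rule wfE_min[OF wf_lex[OF wf_less_than]]) blast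
  then obtain Ts where "forest_family E k Ts" "family_size k Ts = s" "z = level_profile V k Ts ?N"
    unfolding Q_def by blast
  with smax zmin have "optimal_family V E k Ts"
    unfolding optimal_family_def Q_def by blast
  then show ?thesis by blast
qed

lemma optimal_family_covers:
  assumes sg: "simple_graph V E" and opt: "optimal_family V E k Ts"
    and g: "g \<in> E" "g \<notin> inner_edges (level_rel V k Ts (card (V \<times> V)))"
  shows "\<exists>l<k. g \<in> Ts l"
proof (rule ccontr)
  let ?N = "card (V \<times> V)"
  let ?L = "level_rel V k Ts"
  assume "\<not> ?thesis"
  then have unused: "\<forall>l<k. g \<notin> Ts l" by blast
  have fam: "forest_family E k Ts" using opt by (simp add: optimal_family_def)
  have finV: "finite V" using sg by (simp add: simple_graph_def)
  have pairs: "\<forall>g\<in>E. \<exists>a b. g = {a, b}" using simple_graph_edgeE[OF sg] by metis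
  have finE: "finite E" using sg by (rule simple_graph_finite_edges)
  obtain u v where uv: "u \<in> V" "v \<in> V" "g = {u, v}" using simple_graph_edgeE[OF sg g(1)] by metis
  have "(u, v) \<notin> ?L ?N" using g(2) uv(3) doubleton_in_inner_edges by metis
  moreover have "(u, v) \<in> ?L 0" using uv by simp
  ultimately obtain m where m: "m < ?N" "(u, v) \<in> ?L m" "(u, v) \<notin> ?L (Suc m)"
    using ex_least_nat_less[of "\<lambda>i. (u, v) \<notin> ?L i" ?N] by (metis order_refl)
  then obtain j where j: "j < k" "(u, v) \<notin> reach (Ts j \<inter> inner_edges (?L m))" by auto
  show False
  proof (cases "(u, v) \<in> reach (Ts j)")
    case False
    let ?Ts' = "Ts(j := insert {u, v} (Ts j))"
    have "forest_family E k ?Ts'" "family_size k ?Ts' = Suc (family_size k Ts)"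
      using forest_family_augment[OF fam finE j(1)] g(1) unused uv(3) False by simp_all
    with opt show False unfolding optimal_family_def by (metis Suc_n_not_le_n)
  next
    case True
    obtain Ts' where "forest_family E k Ts'" "family_size k Ts' = family_size k Ts"
      "(level_profile V k Ts' ?N, level_profile V k Ts ?N) \<in> lex less_than"
      using forest_family_exchange[OF fam finE finV pairs j(1) _ uv(1,2) _ m(1,2) j(2) True]
        g(1) unused uv(3) by auto
    with opt show False unfolding optimal_family_def by blast
  qed
qed

lemma comps_stable_level:
  assumes fin: "finite V" and l: "l < k"
  shows "comps V (Ts l \<inter> inner_edges (level_rel V k Ts (card (V \<times> V))))
    = card (V // level_rel V k Ts (card (V \<times> V)))"
proof -
  let ?R = "level_rel V k Ts (card (V \<times> V))"
  have "reach (Ts l \<inter> inner_edges ?R) `` {x} = ?R `` {x}" if x: "x \<in> V" for x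
  proof (intro set_eqI iffI)
    fix y assume "y \<in> reach (Ts l \<inter> inner_edges ?R) `` {x}"
    then show "y \<in> ?R `` {x}" using reach_inner_edges_subset[OF equiv_level_rel x] by simp
  next
    fix y assume "y \<in> ?R `` {x}"
    then have "(x, y) \<in> level_rel V k Ts (Suc (card (V \<times> V)))" using level_rel_stable[OF fin] by simp
    then show "y \<in> reach (Ts l \<inter> inner_edges ?R) `` {x}" using l by simp
  qed
  then show ?thesis unfolding comps_def quotient_def by simp
qed

lemma eq_1_if_sum_le_card:
  fixes c :: "'i \<Rightarrow> nat"
  assumes "finite A" "\<forall>i\<in>A. 1 \<le> c i" "sum c A \<le> card A" "i \<in> A"
  shows "c i = 1"
proof (rule ccontr)
  assume "c i \<noteq> 1"
  with assms(2,4) have "1 < c i" by force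
  with assms(1,2,4) have "(\<Sum>_\<in>A. 1) < sum c A" by (intro sum_strict_mono_ex1) auto
  with assms(3) show False by simp
qed

lemma forest_card_diff_add_comps:
  assumes sg: "simple_graph V E" and T: "T \<subseteq> E" "forest T"
  shows "card (T - C) + comps V T = comps V (T \<inter> C)"
proof -
  have fin: "finite V" using sg by (simp add: simple_graph_def)
  have finT: "finite T" using T(1) simple_graph_finite_edges[OF sg] by (rule finite_subset)
  have edges: "\<forall>g\<in>F. \<exists>a b. a \<in> V \<and> b \<in> V \<and> g = {a, b}" if "F \<subseteq> E" for F
    using that simple_graph_edgeE[OF sg] by (metis subsetD)
  have "card T + comps V T = card V"
    using forest_card_comps[OF fin finT T(2) edges[OF T(1)]] .
  moreover have "card (T \<inter> C) + comps V (T \<inter> C) = card V"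
  proof (rule forest_card_comps[OF fin])
    show "finite (T \<inter> C)" using finT by simp
    show "forest (T \<inter> C)" using T(2) by (rule forest_subset) simp
    show "\<forall>g\<in>T \<inter> C. \<exists>a b. a \<in> V \<and> b \<in> V \<and> g = {a, b}" using T(1) by (intro edges) blast
  qed
  moreover have "card T = card (T \<inter> C) + card (T - C)" using finT by (rule card_Int_Diff)
  ultimately show ?thesis by simp
qed

text \<open>
  Every edge outside the stable level relation \<open>R\<close> is used by the family, and each forest has as
  many edges inside \<open>R\<close> as a spanning forest of the classes of \<open>R\<close>; so the partition condition
  for \<open>R\<close> leaves room for only one component per forest.\<close>

lemma optimal_family_connected:
  assumes sg: "simple_graph V E" and ne: "V \<noteq> {}" and opt: "optimal_family V E k Ts"
    and R: "R = level_rel V k Ts (card (V \<times> V))"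
    and cond: "k * (card (V // R) - 1) \<le> card (E - inner_edges R)" and l: "l < k"
  shows "comps V (Ts l) = 1"
proof -
  let ?C = "inner_edges R"
  let ?p = "card (V // R)"
  have fin: "finite V" using sg by (simp add: simple_graph_def)
  have T: "Ts i \<subseteq> E" "forest (Ts i)" if "i < k" for i
    using opt that by (simp_all add: optimal_family_def forest_family_def)
  have finT: "finite (Ts i)" if "i < k" for i
    using T(1)[OF that] simple_graph_finite_edges[OF sg] by (rule finite_subset)
  have count: "card (Ts i - ?C) + comps V (Ts i) = ?p" if i: "i < k" for i
    using forest_card_diff_add_comps[OF sg T[OF i]] comps_stable_level[OF fin i] R by simp
  have "E - ?C \<subseteq> (\<Union>i<k. Ts i - ?C)" using optimal_family_covers[OF sg opt] R by blast
  then have "card (E - ?C) \<le> card (\<Union>i<k. Ts i - ?C)"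
    using finT by (intro card_mono) auto
  also have "\<dots> \<le> (\<Sum>i<k. card (Ts i - ?C))" by (rule card_UN_le) simp
  finally have cut: "card (E - ?C) \<le> (\<Sum>i<k. card (Ts i - ?C))" .
  have "(\<Sum>i<k. card (Ts i - ?C)) + (\<Sum>i<k. comps V (Ts i)) = k * ?p"
    using count by (simp add: sum.distrib[symmetric])
  moreover have "?p \<ge> 1" using fin ne by (simp add: quotient_def Suc_le_eq card_gt_0_iff)
  then have "k * (?p - 1) + k = k * ?p" by (cases ?p) simp_all
  ultimately have "(\<Sum>i<k. comps V (Ts i)) \<le> card {..<k}" unfolding card_lessThan
    using cond cut by linarith
  then show ?thesis
    using comps_pos[OF fin ne] l by (intro eq_1_if_sum_le_card[of "{..<k}"]) auto
qed

theorem forest_packing_if_partition_condition: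
  assumes sg: "simple_graph V E" and ne: "V \<noteq> {}"
    and cond: "\<And>R. equiv V R \<Longrightarrow> k * (card (V // R) - 1) \<le> card (E - inner_edges R)"
  shows "\<exists>Ts. forest_family E k Ts \<and> (\<forall>i<k. connected_on V (Ts i))"
proof -
  obtain Ts where opt: "optimal_family V E k Ts"
    using optimal_family_exists[OF simple_graph_finite_edges[OF sg]] by blast
  have "connected_on V (Ts i)" if "i < k" for i
    unfolding connected_on_iff_reach
    using reach_if_comps_eq_1[OF optimal_family_connected[OF sg ne opt refl cond[OF equiv_level_rel] that]]
    by blast
  moreover have "forest_family E k Ts" using opt by (simp add: optimal_family_def)
  ultimately show ?thesis by blast
qed

section \<open>The spanning tree packing number\<close>

lemma spanning_tree_if_connected_forest:
  "F \<subseteq> E \<Longrightarrow> forest F \<Longrightarrow> connected_on V F \<Longrightarrow> spanning_tree V E F"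
  by (simp add: spanning_tree_def acyclic_edges_if_forest)

lemma degree_ge_disjoint_spanning_trees:
  assumes v: "v \<in> V" and w: "w \<in> V" "w \<noteq> v" and fin: "finite {u. {u, v} \<in> E}"
    and trees: "\<forall>i<k. spanning_tree V E (Us i)" and disj: "\<forall>i<k. \<forall>j<k. i \<noteq> j \<longrightarrow> Us i \<inter> Us j = {}"
  shows "k \<le> degree E v"
proof -
  define z where "z i = (SOME z. {v, z} \<in> Us i)" for i
  have "\<exists>z. {v, z} \<in> Us i" if i: "i < k" for i
  proof -
    have "(v, w) \<in> {(x, y). {x, y} \<in> Us i}\<^sup>*"
      using trees i v w(1) unfolding spanning_tree_def connected_on_def by blast
    then show ?thesis using w(2) by (cases rule: converse_rtranclE) auto
  qed
  then have z: "{v, z i} \<in> Us i" if "i < k" for i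
    unfolding z_def using that by (metis someI_ex)
  have "inj_on z {..<k}"
  proof (rule inj_onI)
    fix i j assume i: "i \<in> {..<k}" and j: "j \<in> {..<k}" and eq: "z i = z j"
    show "i = j"
    proof (rule ccontr)
      assume "i \<noteq> j"
      then have "Us i \<inter> Us j = {}" using disj i j by simp
      moreover have "{v, z i} \<in> Us i" using z i by simp
      moreover have "{v, z i} \<in> Us j" using z[of j] j eq by simp
      ultimately show False by blast
    qed
  qed
  moreover have "z ` {..<k} \<subseteq> {u. {u, v} \<in> E}"
  proof
    fix u assume "u \<in> z ` {..<k}"
    then obtain i where "i < k" "u = z i" by blast
    then have "{v, u} \<in> E" using z trees unfolding spanning_tree_def by blast
    then show "u \<in> {u. {u, v} \<in> E}" by (simp add: insert_commute)
  qed
  then have "card (z ` {..<k}) \<le> card {u. {u, v} \<in> E}" using fin by (rule card_mono[rotated])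
  ultimately show ?thesis by (simp add: degree_def card_image)
qed

theorem tree_packing_eq_min_degree:
  assumes sg: "simple_graph V E" and V2: "2 \<le> card V"
    and cond: "\<And>R. equiv V R \<Longrightarrow> min_degree V E * (card (V // R) - 1) \<le> card (E - inner_edges R)"
  shows "tree_packing V E = min_degree V E"
proof -
  let ?d = "min_degree V E"
  let ?K = "{k. \<exists>Ts :: nat \<Rightarrow> 'a set set. (\<forall>i<k. spanning_tree V E (Ts i)) \<and>
      (\<forall>i<k. \<forall>j<k. i \<noteq> j \<longrightarrow> Ts i \<inter> Ts j = {})}"
  have fin: "finite V" using sg by (simp add: simple_graph_def)
  have ne: "V \<noteq> {}" using V2 by auto
  obtain Ts where "forest_family E ?d Ts" "\<forall>i<?d. connected_on V (Ts i)"
    using forest_packing_if_partition_condition[OF sg ne cond] by blast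
  then have "?d \<in> ?K"
    unfolding forest_family_def by (blast intro: spanning_tree_if_connected_forest)
  have "?d \<in> (\<lambda>v. degree E v) ` V" unfolding min_degree_def using fin ne by (intro Min_in) auto
  then obtain v where v: "v \<in> V" "degree E v = ?d" by (metis imageE)
  have "card (V - {v}) \<ge> 1" using V2 v(1) fin by (simp add: card_Diff_singleton)
  then have "V - {v} \<noteq> {}" by (metis card.empty not_one_le_zero)
  then obtain w where w: "w \<in> V" "w \<noteq> v" by blast
  have "{u. {u, v} \<in> E} \<subseteq> V"
  proof
    fix u assume "u \<in> {u. {u, v} \<in> E}"
    then obtain a b where "a \<in> V" "b \<in> V" "{u, v} = {a, b}"
      using simple_graph_edgeE[OF sg] by (metis mem_Collect_eq)
    then show "u \<in> V" by (metis doubleton_eq_iff)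
  qed
  then have finN: "finite {u. {u, v} \<in> E}" using fin by (rule finite_subset)
  have le: "k \<le> ?d" if "k \<in> ?K" for k
    using that degree_ge_disjoint_spanning_trees[OF v(1) w finN] v(2) by auto
  then have "finite ?K" by (intro finite_subset[of ?K "{..?d}"]) auto
  with le \<open>?d \<in> ?K\<close> show ?thesis
    unfolding tree_packing_def by (intro Max_eqI) auto
qed

section \<open>The partition condition from (a)--(c)\<close>

lemma card_filter_eq_sum: "finite B \<Longrightarrow> card {b\<in>B. r b} = (\<Sum>b\<in>B. if r b then 1 else 0)"
  by (simp add: sum.inter_filter[symmetric])

lemma sum_card_filter_swap:
  assumes "finite A" "finite B"
  shows "(\<Sum>a\<in>A. card {b\<in>B. r a b}) = (\<Sum>b\<in>B. card {a\<in>A. r a b})"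
proof -
  have "(\<Sum>a\<in>A. card {b\<in>B. r a b}) = (\<Sum>a\<in>A. \<Sum>b\<in>B. if r a b then 1 else 0)"
    using assms(2) by (simp add: card_filter_eq_sum)
  also have "\<dots> = (\<Sum>b\<in>B. \<Sum>a\<in>A. if r a b then 1 else 0)" by (rule sum.swap)
  also have "\<dots> = (\<Sum>b\<in>B. card {a\<in>A. r a b})"
    using assms(1) by (simp add: card_filter_eq_sum)
  finally show ?thesis .
qed

lemma min_degree_le_degree: "finite V \<Longrightarrow> v \<in> V \<Longrightarrow> min_degree V E \<le> degree E v"
  unfolding min_degree_def by (intro Min_le) auto

lemma degree_eq_card_incident:
  assumes sg: "simple_graph V E"
  shows "degree E v = card {g\<in>E. v \<in> g}"
proof -
  have "{g\<in>E. v \<in> g} = (\<lambda>u. {u, v}) ` {u. {u, v} \<in> E}"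
  proof (intro set_eqI iffI)
    fix g assume g: "g \<in> {g\<in>E. v \<in> g}"
    then obtain a b where "g = {a, b}" using simple_graph_edgeE[OF sg] by (metis mem_Collect_eq)
    with g obtain u where "g = {u, v}" by auto
    with g show "g \<in> (\<lambda>u. {u, v}) ` {u. {u, v} \<in> E}" by auto
  qed auto
  moreover have "inj_on (\<lambda>u. {u, v}) {u. {u, v} \<in> E}"
    by (rule inj_onI) (auto simp: doubleton_eq_iff)
  ultimately show ?thesis unfolding degree_def by (simp add: card_image)
qed

definition boundary :: "'a set set \<Rightarrow> 'a set \<Rightarrow> 'a set set" where
  "boundary E X = {g\<in>E. g \<inter> X \<noteq> {} \<and> \<not> g \<subseteq> X}"

lemma sum_degree_eq:
  assumes sg: "simple_graph V E" and fX: "finite X"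
  shows "(\<Sum>v\<in>X. degree E v) = 2 * card (induced_edges E X) + card (boundary E X)"
proof -
  have fE: "finite E" using sg by (rule simple_graph_finite_edges)
  have "(\<Sum>v\<in>X. degree E v) = (\<Sum>v\<in>X. card {g\<in>E. v \<in> g})"
    using degree_eq_card_incident[OF sg] by simp
  also have "\<dots> = (\<Sum>g\<in>E. card {v\<in>X. v \<in> g})" by (rule sum_card_filter_swap[OF fX fE])
  also have "\<dots> = (\<Sum>g\<in>E. (if g \<subseteq> X then 2 else 0) + (if g \<in> boundary E X then 1 else 0))"
  proof (rule sum.cong[OF refl])
    fix g assume "g \<in> E"
    moreover obtain a b where "a \<noteq> b" "g = {a, b}" using simple_graph_edgeE[OF sg \<open>g \<in> E\<close>] by metis
    moreover have "{v\<in>X. v \<in> g} = g \<inter> X" by auto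
    ultimately show "card {v\<in>X. v \<in> g} = (if g \<subseteq> X then 2 else 0) + (if g \<in> boundary E X then 1 else 0)"
      unfolding boundary_def by (cases "a \<in> X"; cases "b \<in> X") auto
  qed
  also have "\<dots> = (\<Sum>g\<in>E. if g \<subseteq> X then 2 else 0) + (\<Sum>g\<in>E. if g \<in> boundary E X then 1 else 0)"
    by (rule sum.distrib)
  also have "(\<Sum>g\<in>E. if g \<subseteq> X then 2 else 0) = (\<Sum>g\<in>induced_edges E X. 2::nat)"
    unfolding induced_edges_def using fE by (rule sum.inter_filter[symmetric])
  also have "(\<Sum>g\<in>E. if g \<in> boundary E X then 1 else 0) = card (boundary E X)"
    using card_filter_eq_sum[OF fE, of "\<lambda>g. g \<in> boundary E X"] by (simp add: boundary_def)
  finally show ?thesis by simp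
qed

lemma card_edges_to_light_le:
  assumes sg: "simple_graph V E" and H0: "H0 \<subseteq> V"
    and a3: "\<forall>w\<in>V. card {u. Lt u \<and> {u, w} \<in> E} \<le> 1"
  shows "card {g\<in>E. \<exists>a b. g = {a, b} \<and> a \<in> H0 \<and> Lt b} \<le> card H0"
proof -
  define F where "F = {g\<in>E. \<exists>a b. g = {a, b} \<and> a \<in> H0 \<and> Lt b}"
  have finV: "finite V" using sg unfolding simple_graph_def by simp
  have finH: "finite H0" using finite_subset[OF H0 finV] .
  define phi where "phi g = (SOME a. a \<in> H0 \<and> (\<exists>b. g = {a, b} \<and> Lt b))" for g
  have phi: "phi g \<in> H0 \<and> (\<exists>b. g = {phi g, b} \<and> Lt b)" if "g \<in> F" for g
  proof -
    have "\<exists>a. a \<in> H0 \<and> (\<exists>b. g = {a, b} \<and> Lt b)" using that unfolding F_def by blast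
    then show ?thesis unfolding phi_def by (rule someI_ex)
  qed
  have inj: "inj_on phi F"
  proof (rule inj_onI)
    fix g g' assume g: "g \<in> F" and g': "g' \<in> F" and eq: "phi g = phi g'"
    obtain b where b: "g = {phi g, b}" "Lt b" using phi[OF g] by blast
    obtain b' where b': "g' = {phi g, b'}" "Lt b'" using phi[OF g'] eq by auto
    let ?a = "phi g"
    have aV: "?a \<in> V" using phi[OF g] H0 by blast
    have "g \<in> E" "g' \<in> E" using g g' by (auto simp: F_def)
    then have e: "{b, ?a} \<in> E" "{b', ?a} \<in> E" using b(1) b'(1) by (simp_all add: insert_commute)
    define U where "U = {u. Lt u \<and> {u, ?a} \<in> E}"
    have cU: "card U \<le> 1" using a3 aV unfolding U_def by blast
    have finU: "finite U"
    proof (rule finite_subset[OF _ finV])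
      show "U \<subseteq> V"
      proof
        fix u assume "u \<in> U"
        then have "{u, ?a} \<in> E" unfolding U_def by simp
        then obtain x y where "x \<in> V" "y \<in> V" "{u, ?a} = {x, y}" using sg unfolding simple_graph_def by blast
        then show "u \<in> V" by (auto simp: doubleton_eq_iff)
      qed
    qed
    have "b \<in> U" "b' \<in> U" using e b(2) b'(2) unfolding U_def by auto
    then have "b = b'" using cU finU by (metis card_le_Suc0_iff_eq One_nat_def)
    then show "g = g'" using b(1) b'(1) by simp
  qed
  have "phi ` F \<subseteq> H0" using phi by blast
  then have "card (phi ` F) \<le> card H0" using finH by (rule card_mono[rotated])
  then show ?thesis using card_image[OF inj] by (simp add: F_def)
qed

lemma induced_edges_subset_heavy:
  assumes sg: "simple_graph V E" and indep: "\<forall>u v. L u \<and> L v \<longrightarrow> {u, v} \<notin> E"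
  shows "induced_edges E X \<subseteq>
    induced_edges E {v\<in>X. \<not> L v} \<union> {g\<in>E. \<exists>a b. g = {a, b} \<and> a \<in> {v\<in>X. \<not> L v} \<and> L b}"
proof
  fix g assume "g \<in> induced_edges E X"
  then have gE: "g \<in> E" and gX: "g \<subseteq> X" unfolding induced_edges_def by auto
  obtain a b where ab: "g = {a, b}" using simple_graph_edgeE[OF sg gE] by metis
  show "g \<in> induced_edges E {v\<in>X. \<not> L v} \<union> {g\<in>E. \<exists>a b. g = {a, b} \<and> a \<in> {v\<in>X. \<not> L v} \<and> L b}"
  proof (cases "L a \<or> L b")
    case True
    then have "\<not> (L a \<and> L b)" using indep gE ab by blast
    with True gE gX ab show ?thesis by (auto simp: insert_commute)
  next
    case False
    with gE gX ab show ?thesis unfolding induced_edges_def by auto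
  qed
qed

lemma boundary_subset_heavy:
  assumes sg: "simple_graph V E" and indep: "\<forall>u v. L u \<and> L v \<longrightarrow> {u, v} \<notin> E"
    and \<Lambda>: "\<forall>x\<in>\<Lambda>. L x" "X \<inter> \<Lambda> = {}"
  shows "boundary E X \<subseteq>
    {g\<in>boundary E X. g \<inter> \<Lambda> = {}} \<union> {g\<in>E. \<exists>a b. g = {a, b} \<and> a \<in> {v\<in>X. \<not> L v} \<and> L b}"
proof
  fix g assume g: "g \<in> boundary E X"
  then have gE: "g \<in> E" unfolding boundary_def by simp
  obtain a b where ab: "g = {a, b}" using simple_graph_edgeE[OF sg gE] by metis
  show "g \<in> {g\<in>boundary E X. g \<inter> \<Lambda> = {}} \<union> {g\<in>E. \<exists>a b. g = {a, b} \<and> a \<in> {v\<in>X. \<not> L v} \<and> L b}"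
  proof (cases "g \<inter> \<Lambda> = {}")
    case False
    then have "a \<in> \<Lambda> \<or> b \<in> \<Lambda>" using ab by auto
    then have "a \<in> \<Lambda> \<and> b \<in> X \<or> b \<in> \<Lambda> \<and> a \<in> X" using g \<Lambda>(2) ab unfolding boundary_def by auto
    moreover have "\<not> (L a \<and> L b)" using indep gE ab by blast
    ultimately show ?thesis using gE ab \<Lambda>(1) by (auto simp: insert_commute)
  qed (use g in simp)
qed

lemma sum_degree_ge_light:
  assumes fin: "finite V" and XV: "X \<subseteq> V"
  shows "real (min_degree V E) * card X + \<epsilon> * avg_deg V E * card {v\<in>X. \<not> light V E \<epsilon> v}
    \<le> (\<Sum>v\<in>X. real (degree E v))"
proof -
  let ?d = "real (min_degree V E)"
  let ?D = "\<epsilon> * avg_deg V E"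
  have finX: "finite X" using XV fin by (rule finite_subset)
  have "(\<Sum>v\<in>X. ?d + (if \<not> light V E \<epsilon> v then ?D else 0)) \<le> (\<Sum>v\<in>X. real (degree E v))"
  proof (rule sum_mono)
    fix v assume "v \<in> X"
    then have "v \<in> V" using XV by blast
    then show "?d + (if \<not> light V E \<epsilon> v then ?D else 0) \<le> real (degree E v)"
      using min_degree_le_degree[OF fin, of v E] unfolding light_def by auto
  qed
  moreover have "(\<Sum>v\<in>X. if \<not> light V E \<epsilon> v then ?D else 0) = ?D * card {v\<in>X. \<not> light V E \<epsilon> v}"
    using finX by (simp add: sum.inter_filter[symmetric])
  ultimately show ?thesis by (simp add: sum.distrib mult.commute)
qed

lemma small_part_boundary_bound:
  fixes \<epsilon> \<zeta> :: real and n :: nat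
  assumes sg: "simple_graph V E"
    and a2: "\<forall>u v. light V E \<epsilon> u \<and> light V E \<epsilon> v \<longrightarrow> {u, v} \<notin> E"
    and a3: "\<forall>w\<in>V. card {u. light V E \<epsilon> u \<and> {u, w} \<in> E} \<le> 1"
    and b: "\<forall>S. S \<subseteq> V \<and> real (card S) < \<zeta> * real n \<longrightarrow>
      real (card (induced_edges E S)) \<le> \<epsilon> / 4 * avg_deg V E * real (card S)"
    and X: "X \<subseteq> V" "real (card X) < \<zeta> * real n" "X \<inter> \<Lambda> = {}" and \<Lambda>: "\<forall>x\<in>\<Lambda>. light V E \<epsilon> x"
  shows "real (min_degree V E) * card X + (\<epsilon> * avg_deg V E / 2 - 3) * card {v\<in>X. \<not> light V E \<epsilon> v}
    \<le> real (card {g\<in>boundary E X. g \<inter> \<Lambda> = {}})"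
proof -
  define d where "d = real (min_degree V E)"
  define D where "D = \<epsilon> * avg_deg V E"
  define H where "H = {v\<in>X. \<not> light V E \<epsilon> v}"
  define LE where "LE = {g\<in>E. \<exists>a b. g = {a, b} \<and> a \<in> H \<and> light V E \<epsilon> b}"
  define B where "B = {g\<in>boundary E X. g \<inter> \<Lambda> = {}}"
  have finV: "finite V" using sg by (simp add: simple_graph_def)
  have finE: "finite E" using sg by (rule simple_graph_finite_edges)
  have finX: "finite X" using X(1) finV by (rule finite_subset)
  have HX: "H \<subseteq> X" unfolding H_def by blast
  have cLE: "card LE \<le> card H" unfolding LE_def
    using card_edges_to_light_le[OF sg _ a3] HX X(1) by blast
  have "card (induced_edges E X) \<le> card (induced_edges E H \<union> LE)"
    using induced_edges_subset_heavy[OF sg a2, of X] finE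
    by (intro card_mono) (auto simp: H_def LE_def induced_edges_def)
  then have cI: "card (induced_edges E X) \<le> card (induced_edges E H) + card LE"
    using card_Un_le order_trans by blast
  have "card (boundary E X) \<le> card (B \<union> LE)"
    using boundary_subset_heavy[OF sg a2 \<Lambda> X(3)] finE
    by (intro card_mono) (auto simp: B_def H_def LE_def boundary_def)
  then have cB: "card (boundary E X) \<le> card B + card LE"
    using card_Un_le order_trans by blast
  have "card H \<le> card X" using finX HX by (rule card_mono)
  then have "real (card (induced_edges E H)) \<le> \<epsilon> / 4 * avg_deg V E * real (card H)"
    using b HX X(1,2) by (meson dual_order.trans of_nat_le_iff order_le_less_trans)
  then have cIH: "real (card (induced_edges E H)) \<le> D * real (card H) / 4" by (simp add: D_def)
  have "real (\<Sum>v\<in>X. degree E v) = 2 * real (card (induced_edges E X)) + real (card (boundary E X))"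
    using sum_degree_eq[OF sg finX] by simp
  then have "d * card X + D * card H \<le> 2 * real (card (induced_edges E X)) + real (card (boundary E X))"
    using sum_degree_ge_light[OF finV X(1), of E \<epsilon>] by (simp add: d_def D_def H_def)
  then show ?thesis
    using cI cB cIH cLE by (simp add: d_def D_def H_def B_def algebra_simps)
qed

lemma small_part_boundary:
  fixes \<epsilon> \<zeta> :: real and n :: nat
  assumes sg: "simple_graph V E"
    and a1: "real (min_degree V E) \<le> \<epsilon> / 4 * avg_deg V E"
    and a2: "\<forall>u v. light V E \<epsilon> u \<and> light V E \<epsilon> v \<longrightarrow> {u, v} \<notin> E"
    and a3: "\<forall>w\<in>V. card {u. light V E \<epsilon> u \<and> {u, w} \<in> E} \<le> 1"
    and b: "\<forall>S. S \<subseteq> V \<and> real (card S) < \<zeta> * real n \<longrightarrow>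
      real (card (induced_edges E S)) \<le> \<epsilon> / 4 * avg_deg V E * real (card S)"
    and big: "12 \<le> \<epsilon> * avg_deg V E"
    and X: "X \<subseteq> V" "real (card X) < \<zeta> * real n" "X \<inter> \<Lambda> = {}" and \<Lambda>: "\<forall>x\<in>\<Lambda>. light V E \<epsilon> x"
    and shape: "2 \<le> card X \<or> (\<exists>x. X = {x} \<and> \<not> light V E \<epsilon> x)"
  shows "2 * real (min_degree V E) \<le> real (card {g\<in>boundary E X. g \<inter> \<Lambda> = {}})"
proof -
  define d where "d = real (min_degree V E)"
  define D where "D = \<epsilon> * avg_deg V E"
  define H where "H = {v\<in>X. \<not> light V E \<epsilon> v}"
  have main: "d * card X + (D / 2 - 3) * card H \<le> real (card {g\<in>boundary E X. g \<inter> \<Lambda> = {}})"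
    unfolding d_def D_def H_def by (rule small_part_boundary_bound[OF sg a2 a3 b X \<Lambda>])
  show ?thesis
  proof (cases "2 \<le> card X")
    case True
    then have "2 * d \<le> d * card X" unfolding d_def
      by (metis mult.commute mult_left_mono of_nat_0_le_iff of_nat_le_iff of_nat_numeral)
    moreover have "0 \<le> (D / 2 - 3) * card H" using big by (simp add: D_def)
    ultimately show ?thesis using main by (simp add: d_def)
  next
    case False
    then obtain x where x: "X = {x}" "\<not> light V E \<epsilon> x" using shape by auto
    then have "H = {x}" unfolding H_def by auto
    with x have "card H = 1" "card X = 1" by simp_all
    moreover have "d \<le> D / 2 - 3" using a1 big by (simp add: d_def D_def)
    ultimately show ?thesis using main by (simp add: d_def)
  qed
qed

lemma min_degree_mult_card_le_incident:
  assumes sg: "simple_graph V E" and L: "L \<subseteq> V" and indep: "\<forall>x\<in>L. \<forall>y\<in>L. {x, y} \<notin> E"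
  shows "min_degree V E * card L \<le> card {g\<in>E. g \<inter> L \<noteq> {}}"
proof -
  let ?I = "\<lambda>x. {g\<in>E. x \<in> g}"
  have finV: "finite V" using sg by (simp add: simple_graph_def)
  have finE: "finite E" using sg by (rule simple_graph_finite_edges)
  have finL: "finite L" using L finV by (rule finite_subset)
  have disj: "?I x \<inter> ?I y = {}" if "x \<in> L" "y \<in> L" "x \<noteq> y" for x y
  proof (rule ccontr)
    assume "?I x \<inter> ?I y \<noteq> {}"
    then obtain g where g: "g \<in> E" "x \<in> g" "y \<in> g" by blast
    then obtain a b where "g = {a, b}" using simple_graph_edgeE[OF sg] by metis
    with g that(3) have "g = {x, y}" by auto
    with g(1) indep that(1,2) show False by blast
  qed
  have "min_degree V E * card L = (\<Sum>x\<in>L. min_degree V E)" by simp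
  also have "\<dots> \<le> (\<Sum>x\<in>L. card (?I x))"
  proof (rule sum_mono)
    fix x assume "x \<in> L"
    then show "min_degree V E \<le> card (?I x)"
      using L min_degree_le_degree[OF finV] degree_eq_card_incident[OF sg] by (metis subsetD)
  qed
  also have "\<dots> = card (\<Union>x\<in>L. ?I x)"
    using finL finE disj by (intro card_UN_disjoint[symmetric]) auto
  also have "\<dots> \<le> card {g\<in>E. g \<inter> L \<noteq> {}}" using finE by (intro card_mono) auto
  finally show ?thesis .
qed

lemma sum_card_meeting_le:
  assumes finQ: "finite Q" and finC: "finite C" and disj: "\<forall>X\<in>Q. \<forall>Y\<in>Q. X \<noteq> Y \<longrightarrow> X \<inter> Y = {}"
    and pairs: "\<forall>g\<in>C. \<exists>a b. g = {a, b}"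
  shows "(\<Sum>X\<in>Q. card {g\<in>C. g \<inter> X \<noteq> {}}) \<le> 2 * card C"
proof -
  have one: "card {X\<in>Q. a \<in> X} \<le> 1" for a
    unfolding One_nat_def using disj finQ by (subst card_le_Suc0_iff_eq) auto
  have "(\<Sum>X\<in>Q. card {g\<in>C. g \<inter> X \<noteq> {}}) = (\<Sum>g\<in>C. card {X\<in>Q. g \<inter> X \<noteq> {}})"
    by (rule sum_card_filter_swap[OF finQ finC])
  also have "\<dots> \<le> (\<Sum>g\<in>C. 2)"
  proof (rule sum_mono)
    fix g assume "g \<in> C"
    then obtain a b where g: "g = {a, b}" using pairs by blast
    have "card {X\<in>Q. g \<inter> X \<noteq> {}} \<le> card ({X\<in>Q. a \<in> X} \<union> {X\<in>Q. b \<in> X})"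
      using finQ g by (intro card_mono) auto
    also have "\<dots> \<le> 2" using card_Un_le[of "{X\<in>Q. a \<in> X}" "{X\<in>Q. b \<in> X}"] one[of a] one[of b] by linarith
    finally show "card {X\<in>Q. g \<inter> X \<noteq> {}} \<le> 2" .
  qed
  finally show ?thesis by simp
qed

lemma large_part_boundary:
  fixes \<eta> \<zeta> :: real and n :: nat
  assumes c: "\<forall>S S'. S \<subseteq> V \<and> S' \<subseteq> V \<and> S \<inter> S' = {} \<and>
      card S \<ge> card S' \<and> real (card S') \<ge> \<zeta> * real n \<longrightarrow>
      real (card (cross_edges E S S')) \<ge> \<eta> * avg_deg V E * real n"
    and finE: "finite E"
    and X: "X \<subseteq> V" "\<zeta> * real n \<le> real (card X)" "X \<inter> \<Lambda> = {}"
    and Y: "Y \<subseteq> V" "\<zeta> * real n \<le> real (card Y)" "Y \<inter> \<Lambda> = {}" and XY: "X \<inter> Y = {}"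
  shows "\<eta> * avg_deg V E * real n \<le> real (card {g\<in>boundary E X. g \<inter> \<Lambda> = {}})"
proof -
  have sym: "cross_edges E Y X = cross_edges E X Y"
    unfolding cross_edges_def by (auto simp: insert_commute)
  have "\<eta> * avg_deg V E * real n \<le> real (card (cross_edges E X Y))"
  proof (cases "card Y \<le> card X")
    case True
    then show ?thesis using c X Y XY by blast
  next
    case False
    then have "\<eta> * avg_deg V E * real n \<le> real (card (cross_edges E Y X))"
      using c X Y XY by (metis inf_commute nat_le_linear)
    with sym show ?thesis by simp
  qed
  moreover have "cross_edges E X Y \<subseteq> {g\<in>boundary E X. g \<inter> \<Lambda> = {}}"
    using X(3) Y(3) XY unfolding cross_edges_def boundary_def by blast
  then have "card (cross_edges E X Y) \<le> card {g\<in>boundary E X. g \<inter> \<Lambda> = {}}"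
    using finE by (intro card_mono) (simp_all add: boundary_def)
  ultimately show ?thesis by linarith
qed

lemma sum_part_boundaries_ge:
  fixes \<epsilon> \<zeta> \<eta> :: real and n :: nat
  assumes sg: "simple_graph V E"
    and a1: "real (min_degree V E) \<le> \<epsilon> / 4 * avg_deg V E"
    and a2: "\<forall>u v. light V E \<epsilon> u \<and> light V E \<epsilon> v \<longrightarrow> {u, v} \<notin> E"
    and a3: "\<forall>w\<in>V. card {u. light V E \<epsilon> u \<and> {u, w} \<in> E} \<le> 1"
    and b: "\<forall>S. S \<subseteq> V \<and> real (card S) < \<zeta> * real n \<longrightarrow>
      real (card (induced_edges E S)) \<le> \<epsilon> / 4 * avg_deg V E * real (card S)"
    and c: "\<forall>S S'. S \<subseteq> V \<and> S' \<subseteq> V \<and> S \<inter> S' = {} \<and>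
      card S \<ge> card S' \<and> real (card S') \<ge> \<zeta> * real n \<longrightarrow>
      real (card (cross_edges E S S')) \<ge> \<eta> * avg_deg V E * real n"
    and big: "12 \<le> \<epsilon> * avg_deg V E" and \<eta>n: "\<epsilon> / 2 \<le> \<eta> * real n" and \<epsilon>: "0 < \<epsilon>"
    and finQ: "finite Q" and disj: "\<forall>X\<in>Q. \<forall>Y\<in>Q. X \<noteq> Y \<longrightarrow> X \<inter> Y = {}"
    and parts: "\<forall>X\<in>Q. X \<subseteq> V \<and> X \<inter> \<Lambda> = {} \<and> (2 \<le> card X \<or> (\<exists>x. X = {x} \<and> \<not> light V E \<epsilon> x))"
    and \<Lambda>: "\<forall>x\<in>\<Lambda>. light V E \<epsilon> x"
  shows "2 * real (min_degree V E) * (real (card Q) - 1)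
    \<le> (\<Sum>X\<in>Q. real (card {g\<in>boundary E X. g \<inter> \<Lambda> = {}}))"
proof -
  let ?d = "real (min_degree V E)"
  let ?bd = "\<lambda>X. real (card {g\<in>boundary E X. g \<inter> \<Lambda> = {}})"
  let ?Bad = "{X\<in>Q. ?bd X < 2 * ?d}"
  have "0 < \<epsilon> * avg_deg V E" using big by linarith
  with \<epsilon> have "0 \<le> avg_deg V E" by (simp add: zero_less_mult_iff)
  with \<eta>n have "\<epsilon> / 2 * avg_deg V E \<le> \<eta> * real n * avg_deg V E" by (rule mult_right_mono)
  moreover have "2 * ?d \<le> \<epsilon> / 2 * avg_deg V E" using a1 by simp
  ultimately have d\<eta>: "2 * ?d \<le> \<eta> * avg_deg V E * real n" by (simp add: mult_ac)
  have large: "2 * ?d \<le> ?bd X"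
    if "X \<in> Q" "Y \<in> Q" "X \<noteq> Y" "\<zeta> * real n \<le> real (card X)" "\<zeta> * real n \<le> real (card Y)" for X Y
  proof -
    have "\<eta> * avg_deg V E * real n \<le> ?bd X"
      by (rule large_part_boundary[OF c simple_graph_finite_edges[OF sg], of X \<Lambda> Y])
        (use parts disj that in auto)
    with d\<eta> show ?thesis by linarith
  qed
  have small: "2 * ?d \<le> ?bd X" if "X \<in> Q" "real (card X) < \<zeta> * real n" for X
    by (rule small_part_boundary[OF sg a1 a2 a3 b big _ that(2) _ \<Lambda>]) (use parts that(1) in auto)
  have "card ?Bad \<le> Suc 0"
  proof (subst card_le_Suc0_iff_eq)
    show "finite ?Bad" using finQ by simp
    show "\<forall>X\<in>?Bad. \<forall>Y\<in>?Bad. X = Y"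
    proof (intro ballI, rule ccontr)
      fix X Y assume X: "X \<in> ?Bad" and Y: "Y \<in> ?Bad" and "X \<noteq> Y"
      then have "\<not> real (card X) < \<zeta> * real n" "\<not> real (card Y) < \<zeta> * real n"
        using small by force+
      with X Y \<open>X \<noteq> Y\<close> large[of X Y] show False by simp
    qed
  qed
  then have "real (card Q) - 1 \<le> real (card (Q - ?Bad))"
    using finQ by (simp add: card_Diff_subset)
  then have "2 * ?d * (real (card Q) - 1) \<le> 2 * ?d * real (card (Q - ?Bad))"
    by (intro mult_left_mono) simp_all
  also have "\<dots> = (\<Sum>X\<in>Q - ?Bad. 2 * ?d)" by simp
  also have "\<dots> \<le> (\<Sum>X\<in>Q - ?Bad. ?bd X)" by (intro sum_mono) auto
  also have "\<dots> \<le> (\<Sum>X\<in>Q. ?bd X)" using finQ by (intro sum_mono2) auto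
  finally show ?thesis .
qed

lemma class_cut_edges_eq_boundary:
  assumes sg: "simple_graph V E" and R: "equiv V R" and X: "X \<in> V // R"
  shows "{g\<in>E - inner_edges R. g \<inter> X \<noteq> {}} = boundary E X"
proof -
  have "g \<in> inner_edges R \<longleftrightarrow> g \<subseteq> X" if g: "g \<in> E" "g \<inter> X \<noteq> {}" for g
  proof -
    obtain a b where ab: "g = {a, b}" using simple_graph_edgeE[OF sg g(1)] by metis
    with g(2) obtain x y where xy: "g = {x, y}" "x \<in> X" by auto
    then have "X = R `` {x}" using R X by (metis Image_singleton_iff equiv_class_eq quotientE)
    moreover have "sym R" using R by (simp add: equiv_def)
    ultimately show ?thesis using xy by (simp add: doubleton_in_inner_edges_iff)
  qed
  then show ?thesis unfolding boundary_def by auto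
qed

lemma class_not_light_singleton:
  assumes fin: "finite V" and R: "equiv V R" and X: "X \<in> V // R"
    and \<Lambda>: "\<Lambda> = {x\<in>V. L x \<and> R `` {x} = {x}}" and nX: "X \<notin> (\<lambda>x. {x}) ` \<Lambda>"
  shows "X \<inter> \<Lambda> = {}" and "2 \<le> card X \<or> (\<exists>x. X = {x} \<and> \<not> L x)"
proof -
  obtain x where x: "x \<in> V" "X = R `` {x}" using X by (rule quotientE)
  have XV: "X \<subseteq> V" using R X by (metis Union_quotient Union_upper)
  show "X \<inter> \<Lambda> = {}"
  proof (rule ccontr)
    assume "X \<inter> \<Lambda> \<noteq> {}"
    then obtain y where y: "y \<in> X" "y \<in> \<Lambda>" by blast
    then have "X = R `` {y}" using R x by (metis Image_singleton_iff equiv_class_eq)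
    with y(2) \<Lambda> have "X = {y}" by simp
    with y(2) nX show False by blast
  qed
  have "x \<in> X" using equiv_class_self[OF R x(1)] x(2) by simp
  moreover have "finite X" using XV fin by (rule finite_subset)
  ultimately have single: "card X = 1 \<Longrightarrow> X = {x}" by (metis card_1_singletonE singletonD)
  show "2 \<le> card X \<or> (\<exists>x. X = {x} \<and> \<not> L x)"
  proof (rule ccontr)
    assume none: "\<not> (2 \<le> card X \<or> (\<exists>x. X = {x} \<and> \<not> L x))"
    have "card X \<noteq> 0" using \<open>x \<in> X\<close> \<open>finite X\<close> by auto
    with none have "X = {x}" using single by linarith
    with none have "x \<in> \<Lambda>" using x \<Lambda> by auto
    with nX \<open>X = {x}\<close> show False by blast
  qed
qed

lemma card_quotient_singletons:
  assumes fin: "finite V" and \<Lambda>: "\<forall>x\<in>\<Lambda>. x \<in> V \<and> R `` {x} = {x}"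
  shows "card (V // R) = card \<Lambda> + card (V // R - (\<lambda>x. {x}) ` \<Lambda>)"
proof -
  have finP: "finite (V // R)" using fin by (simp add: quotient_def)
  have single: "(\<lambda>x. {x}) ` \<Lambda> \<subseteq> V // R"
  proof (rule image_subsetI)
    fix x assume "x \<in> \<Lambda>"
    with \<Lambda> show "{x} \<in> V // R" by (metis quotientI)
  qed
  then have "card ((\<lambda>x. {x}) ` \<Lambda>) \<le> card (V // R)" using finP by (rule card_mono[rotated])
  moreover have "card ((\<lambda>x. {x}) ` \<Lambda>) = card \<Lambda>" by (simp add: card_image)
  ultimately show ?thesis
    using single finP by (simp add: card_Diff_subset finite_subset)
qed

lemma min_degree_mult_card_le_cut_at_singletons:
  assumes sg: "simple_graph V E" and R: "equiv V R"
    and \<Lambda>: "\<forall>x\<in>\<Lambda>. x \<in> V \<and> R `` {x} = {x}" and indep: "\<forall>x\<in>\<Lambda>. \<forall>y\<in>\<Lambda>. {x, y} \<notin> E"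
  shows "min_degree V E * card \<Lambda> \<le> card {g\<in>E - inner_edges R. g \<inter> \<Lambda> \<noteq> {}}"
proof -
  have "{g\<in>E. g \<inter> \<Lambda> \<noteq> {}} \<subseteq> {g\<in>E - inner_edges R. g \<inter> \<Lambda> \<noteq> {}}"
  proof
    fix g assume g: "g \<in> {g\<in>E. g \<inter> \<Lambda> \<noteq> {}}"
    then obtain a b where "a \<noteq> b" "g = {a, b}" using simple_graph_edgeE[OF sg] by blast
    moreover from this g have "a \<in> \<Lambda> \<or> b \<in> \<Lambda>" by auto
    ultimately obtain x y where xy: "x \<in> \<Lambda>" "x \<noteq> y" "g = {x, y}" by (metis insert_commute)
    have "(x, y) \<notin> R" using xy(1,2) \<Lambda> by auto
    then have "g \<notin> inner_edges R" using R xy(3) by (simp add: equiv_def doubleton_in_inner_edges_iff)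
    with g show "g \<in> {g\<in>E - inner_edges R. g \<inter> \<Lambda> \<noteq> {}}" by simp
  qed
  moreover have "finite {g\<in>E - inner_edges R. g \<inter> \<Lambda> \<noteq> {}}"
    using simple_graph_finite_edges[OF sg] by simp
  moreover have "\<Lambda> \<subseteq> V" using \<Lambda> by blast
  then have "min_degree V E * card \<Lambda> \<le> card {g\<in>E. g \<inter> \<Lambda> \<noteq> {}}"
    using indep by (rule min_degree_mult_card_le_incident[OF sg])
  ultimately show ?thesis by (meson card_mono order_trans)
qed

lemma sum_class_boundaries_le:
  assumes sg: "simple_graph V E" and R: "equiv V R" and Q: "finite Q" "Q \<subseteq> V // R"
  shows "(\<Sum>X\<in>Q. card {g\<in>boundary E X. g \<inter> \<Lambda> = {}}) \<le> 2 * card {g\<in>E - inner_edges R. g \<inter> \<Lambda> = {}}"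
proof -
  let ?C = "{g\<in>E - inner_edges R. g \<inter> \<Lambda> = {}}"
  have bd: "{g\<in>?C. g \<inter> X \<noteq> {}} = {g\<in>boundary E X. g \<inter> \<Lambda> = {}}" if "X \<in> Q" for X
  proof -
    have "{g\<in>E - inner_edges R. g \<inter> X \<noteq> {}} = boundary E X"
      using class_cut_edges_eq_boundary[OF sg R] that Q(2) by blast
    then show ?thesis by auto
  qed
  have disj: "\<forall>X\<in>Q. \<forall>Y\<in>Q. X \<noteq> Y \<longrightarrow> X \<inter> Y = {}"
    using quotient_disj[OF R] Q(2) by blast
  have pairs: "\<forall>g\<in>?C. \<exists>a b. g = {a, b}"
    using simple_graph_edgeE[OF sg] by (metis (no_types, lifting) DiffD1 mem_Collect_eq)
  have "(\<Sum>X\<in>Q. card {g\<in>boundary E X. g \<inter> \<Lambda> = {}}) = (\<Sum>X\<in>Q. card {g\<in>?C. g \<inter> X \<noteq> {}})"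
  proof (rule sum.cong[OF refl])
    fix X assume "X \<in> Q"
    show "card {g\<in>boundary E X. g \<inter> \<Lambda> = {}} = card {g\<in>?C. g \<inter> X \<noteq> {}}"
      by (simp only: bd[OF \<open>X \<in> Q\<close>])
  qed
  also have "\<dots> \<le> 2 * card ?C"
    using simple_graph_finite_edges[OF sg] by (intro sum_card_meeting_le[OF Q(1) _ disj pairs]) simp
  finally show ?thesis .
qed

lemma partition_condition:
  fixes \<epsilon> \<zeta> \<eta> :: real and n :: nat
  assumes sg: "simple_graph V E"
    and a1: "real (min_degree V E) \<le> \<epsilon> / 4 * avg_deg V E"
    and a2: "\<forall>u v. light V E \<epsilon> u \<and> light V E \<epsilon> v \<longrightarrow> {u, v} \<notin> E"
    and a3: "\<forall>w\<in>V. card {u. light V E \<epsilon> u \<and> {u, w} \<in> E} \<le> 1"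
    and b: "\<forall>S. S \<subseteq> V \<and> real (card S) < \<zeta> * real n \<longrightarrow>
      real (card (induced_edges E S)) \<le> \<epsilon> / 4 * avg_deg V E * real (card S)"
    and c: "\<forall>S S'. S \<subseteq> V \<and> S' \<subseteq> V \<and> S \<inter> S' = {} \<and>
      card S \<ge> card S' \<and> real (card S') \<ge> \<zeta> * real n \<longrightarrow>
      real (card (cross_edges E S S')) \<ge> \<eta> * avg_deg V E * real n"
    and big: "12 \<le> \<epsilon> * avg_deg V E" and \<eta>n: "\<epsilon> / 2 \<le> \<eta> * real n" and \<epsilon>: "0 < \<epsilon>"
    and R: "equiv V R"
  shows "min_degree V E * (card (V // R) - 1) \<le> card (E - inner_edges R)"
proof -
  let ?d = "min_degree V E"
  define \<Lambda> where "\<Lambda> = {x\<in>V. light V E \<epsilon> x \<and> R `` {x} = {x}}"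
  define Q where "Q = V // R - (\<lambda>x. {x}) ` \<Lambda>"
  have finV: "finite V" using sg by (simp add: simple_graph_def)
  have finQ: "finite Q" using finV by (simp add: Q_def quotient_def)
  have \<Lambda>: "\<forall>x\<in>\<Lambda>. x \<in> V \<and> R `` {x} = {x}" by (simp add: \<Lambda>_def)
  have parts: "\<forall>X\<in>Q. X \<subseteq> V \<and> X \<inter> \<Lambda> = {} \<and> (2 \<le> card X \<or> (\<exists>x. X = {x} \<and> \<not> light V E \<epsilon> x))"
  proof
    fix X assume "X \<in> Q"
    then have X: "X \<in> V // R" "X \<notin> (\<lambda>x. {x}) ` \<Lambda>" by (simp_all add: Q_def)
    have "X \<subseteq> V" using R X(1) by (metis Union_quotient Union_upper)
    with class_not_light_singleton[OF finV R X(1) \<Lambda>_def X(2)]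
    show "X \<subseteq> V \<and> X \<inter> \<Lambda> = {} \<and> (2 \<le> card X \<or> (\<exists>x. X = {x} \<and> \<not> light V E \<epsilon> x))" by blast
  qed
  have disj: "\<forall>X\<in>Q. \<forall>Y\<in>Q. X \<noteq> Y \<longrightarrow> X \<inter> Y = {}"
    using quotient_disj[OF R] unfolding Q_def by blast
  have "2 * real ?d * (real (card Q) - 1) \<le> (\<Sum>X\<in>Q. real (card {g\<in>boundary E X. g \<inter> \<Lambda> = {}}))"
    by (rule sum_part_boundaries_ge[OF sg a1 a2 a3 b c big \<eta>n \<epsilon> finQ disj parts]) (simp add: \<Lambda>_def)
  also have "\<dots> \<le> 2 * real (card {g\<in>E - inner_edges R. g \<inter> \<Lambda> = {}})"
  proof -
    have "(\<Sum>X\<in>Q. card {g\<in>boundary E X. g \<inter> \<Lambda> = {}}) \<le> 2 * card {g\<in>E - inner_edges R. g \<inter> \<Lambda> = {}}"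
      using sum_class_boundaries_le[OF sg R finQ] by (simp add: Q_def)
    then have "real (\<Sum>X\<in>Q. card {g\<in>boundary E X. g \<inter> \<Lambda> = {}})
        \<le> real (2 * card {g\<in>E - inner_edges R. g \<inter> \<Lambda> = {}})"
      by (simp only: of_nat_le_iff)
    then show ?thesis by simp
  qed
  finally have "real ?d * (real (card Q) - 1) \<le> real (card {g\<in>E - inner_edges R. g \<inter> \<Lambda> = {}})" by simp
  moreover have "?d * card \<Lambda> \<le> card {g\<in>E - inner_edges R. g \<inter> \<Lambda> \<noteq> {}}"
    using a2 by (intro min_degree_mult_card_le_cut_at_singletons[OF sg R \<Lambda>]) (simp add: \<Lambda>_def)
  then have "real ?d * real (card \<Lambda>) \<le> real (card {g\<in>E - inner_edges R. g \<inter> \<Lambda> \<noteq> {}})"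
    by (simp only: of_nat_le_iff of_nat_mult[symmetric])
  moreover have "card (E - inner_edges R) =
      card {g\<in>E - inner_edges R. g \<inter> \<Lambda> \<noteq> {}} + card {g\<in>E - inner_edges R. g \<inter> \<Lambda> = {}}"
  proof -
    have "card (E - inner_edges R) =
        card ({g\<in>E - inner_edges R. g \<inter> \<Lambda> \<noteq> {}} \<union> {g\<in>E - inner_edges R. g \<inter> \<Lambda> = {}})"
      by (rule arg_cong[where f = card]) blast
    also have "\<dots> = card {g\<in>E - inner_edges R. g \<inter> \<Lambda> \<noteq> {}} + card {g\<in>E - inner_edges R. g \<inter> \<Lambda> = {}}"
      using simple_graph_finite_edges[OF sg] by (intro card_Un_disjoint) auto
    finally show ?thesis .
  qed
  moreover have "real ?d * (real (card (V // R)) - 1) = real ?d * real (card \<Lambda>) + real ?d * (real (card Q) - 1)"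
    using card_quotient_singletons[OF finV \<Lambda>] by (simp add: Q_def algebra_simps)
  ultimately have "real ?d * (real (card (V // R)) - 1) \<le> real (card (E - inner_edges R))"
    by linarith
  then have "real (?d * (card (V // R) - 1)) \<le> real (card (E - inner_edges R))"
    by (cases "card (V // R)") simp_all
  then show ?thesis by (simp only: of_nat_le_iff)
qed

theorem proposition3p3:
  fixes G :: "nat \<Rightarrow> nat set set"
  assumes graphs: "\<And>n. simple_graph {1..n} (G n)"
    and dbar_inf: "filterlim (\<lambda>n. avg_deg {1..n} (G n)) at_top sequentially"
    and hyp: "\<exists>\<epsilon> \<zeta> \<eta>. \<epsilon> > 0 \<and> \<zeta> > 0 \<and> \<eta> > 0 \<and>
      (\<forall>\<^sub>F n in sequentially.
         \<comment> \<open>(a)\<close>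
         real (min_degree {1..n} (G n)) \<le> (\<epsilon> / 4) * avg_deg {1..n} (G n) \<and>
         (\<forall>u v. light {1..n} (G n) \<epsilon> u \<and> light {1..n} (G n) \<epsilon> v \<longrightarrow> {u, v} \<notin> G n) \<and>
         (\<forall>w\<in>{1..n}. card {u. light {1..n} (G n) \<epsilon> u \<and> {u, w} \<in> G n} \<le> 1) \<and>
         \<comment> \<open>(b)\<close>
         (\<forall>S. S \<subseteq> {1..n} \<and> real (card S) < \<zeta> * real n \<longrightarrow>
              real (card (induced_edges (G n) S)) \<le> (\<epsilon> / 4) * avg_deg {1..n} (G n) * real (card S)) \<and>
         \<comment> \<open>(c)\<close>
         (\<forall>S S'. S \<subseteq> {1..n} \<and> S' \<subseteq> {1..n} \<and> S \<inter> S' = {} \<and>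
              card S \<ge> card S' \<and> real (card S') \<ge> \<zeta> * real n \<longrightarrow>
              real (card (cross_edges (G n) S S')) \<ge> \<eta> * avg_deg {1..n} (G n) * real n))"
  shows "\<forall>\<^sub>F n in sequentially. tree_packing {1..n} (G n) = min_degree {1..n} (G n)"
  using hyp
proof (elim exE conjE, goal_cases)
  case (1 \<epsilon> \<zeta> \<eta>)
  have "filterlim (\<lambda>n. \<eta> * real n) at_top sequentially"
    using \<open>0 < \<eta>\<close> by (intro filterlim_tendsto_pos_mult_at_top[OF tendsto_const] filterlim_real_sequentially)
  with dbar_inf have "\<forall>\<^sub>F n in sequentially. 12 / \<epsilon> \<le> avg_deg {1..n} (G n) \<and> \<epsilon> / 2 \<le> \<eta> * real n \<and> 2 \<le> n"
    unfolding filterlim_at_top by (intro eventually_conj eventually_ge_at_top) blast+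
  with 1(4) show ?case
  proof eventually_elim
    case (elim n)
    then have "12 \<le> \<epsilon> * avg_deg {1..n} (G n)" using \<open>0 < \<epsilon>\<close> by (simp add: field_simps)
    with elim show ?case
      by (intro tree_packing_eq_min_degree[OF graphs] partition_condition[OF graphs _ _ _ _ _ _ _ \<open>0 < \<epsilon>\<close>])
        auto
  qed
qed

end
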